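(* Let $l,u,\hbar$ satisfy the standing assumptions below and let $\overline{Y}\in C^1_G(0,T)$ with $l_T\le\hat{\mathbb{E}}[\hbar(T,\overline{Y}_T)]\le u_T$. Then there exists a unique solution $(Y,R)\in C^1_G(0,T)\times C^T_B$ to the backward Skorokhod problem with sublinear expectation associated to $\overline{Y},\hbar$ and barriers $l,u$. Moreover, for $t\in[0,T]$, $$R_T-R_t=-\max\Big\{(\hat{\mathbb{E}}[\overline{Y}_T]-U_T(\overline{Y}_T))^+\wedge\inf_{t\le v\le T}(\hat{\mathbb{E}}[\overline{Y}_v]-L_v(\overline{Y}_v)),\ \sup_{t\le s\le T}\Big[(\hat{\mathbb{E}}[\overline{Y}_s]-U_s(\overline{Y}_s))\wedge\inf_{t\le v\le s}(\hat{\mathbb{E}}[\overline{Y}_v]-L_v(\overline{Y}_v))\Big]\Big\}.$$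
   Context: Setting: $\Omega_T=\{\omega\in C([0,T];\mathbb{R}^d):\omega_0=0\}$, $B$ the canonical process, $\hat{\mathbb{E}}$ the (sublinear) $G$-expectation for a monotone sublinear non-degenerate $G$; $L^1_G(\Omega_t)$ is the completion of bounded Lipschitz cylinder functionals of $B$ up to time $t$ under $\hat{\mathbb{E}}|\cdot|$. $C^1_G(0,T)$ is the set of processes $Y$ with $Y_v\in L^1_G(\Omega_v)$ for all $v$ and $v\mapsto Y_v$ continuous for the norm $\hat{\mathbb{E}}|\cdot|$; $C^T_B$ is the set of deterministic continuous functions $R:[0,T]\to\mathbb{R}$ of bounded variation with $R_0=0$. Standing assumptions: $l,u:[0,T]\to\mathbb{R}$ bounded continuous, $\inf_t(u_t-l_t)>0$; $\hbar:[0,T]\times\Omega_T\times\mathbb{R}\to\mathbb{R}$ with $(t,y)\mapsto\hbar(t,y)$ uniformly continuous uniformly in $\omega$, $y\mapsto\hbar(t,y)$ strictly increasing, $\hbar(t,y)\in L^1_G(\Omega_T)$ and $\hat{\mathbb{E}}[\lim_{y\downarrow-\infty}\hbar(t,y)]<\inf_sl_s<\sup_su_s<\hat{\mathbb{E}}[\lim_{y\uparrow\infty}\hbar(t,y)]$, $|\hbar(t,y)|\le C_\hbar(1+|y|)$, and $\underline{c}|y-y'|\le|\hbar(t,y)-\hbar(t,y')|\le\overline{c}|y-y'|$ for constants $C_\hbar>0$, $0<\underline{c}\le\overline{c}$. For $X\in L^1_G(\Omega_t)$ set $\overline{H}(t,x,X)=\hat{\mathbb{E}}[\hbar(t,x+X-\hat{\mathbb{E}}[X])]$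 ($x\in\mathbb{R}$; continuous, strictly increasing, onto $\mathbb{R}$ in $x$), $L_t(X)=\overline{H}^{-1}(t,\cdot,X)(l_t)$ and $U_t(X)=\overline{H}^{-1}(t,\cdot,X)(u_t)$. A pair $(Y,R)\in C^1_G(0,T)\times C^T_B$ solves the backward Skorokhod problem with sublinear expectation associated to $\overline{Y},\hbar,l,u$ if (i) $Y_t=\overline{Y}_t+R_T-R_t$ for $t\in[0,T]$; (ii) $l_t\le\hat{\mathbb{E}}[\hbar(t,Y_t)]\le u_t$ for all $t$; (iii) $R$ is deterministic, of bounded variation, $R_0=0$, and $\int_s^t(\hat{\mathbb{E}}[\hbar(v,Y_v)]-l_v)dR_v\le0$, $\int_s^t(\hat{\mathbb{E}}[\hbar(v,Y_v)]-u_v)dR_v\le0$ for all $0\le s\le t\le T$. *)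

theory Defs
  imports "HOL-Analysis.Analysis"
begin

definition sublinear_expectation :: "('w \<Rightarrow> real) set \<Rightarrow> (('w \<Rightarrow> real) \<Rightarrow> real) \<Rightarrow> bool" where
  "sublinear_expectation H E \<longleftrightarrow>
     (\<forall>c. (\<lambda>_. c) \<in> H) \<and>
     (\<forall>X\<in>H. \<forall>Y\<in>H. (\<lambda>w. X w + Y w) \<in> H) \<and>
     (\<forall>X\<in>H. \<forall>a. (\<lambda>w. a * X w) \<in> H) \<and>
     (\<forall>X\<in>H. (\<lambda>w. \<bar>X w\<bar>) \<in> H) \<and>
     (\<forall>X\<in>H. \<forall>Y\<in>H. (\<forall>w. X w \<le> Y w) \<longrightarrow> E X \<le> E Y) \<and>
     (\<forall>c. E (\<lambda>_. c) = c) \<and>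
     (\<forall>X\<in>H. \<forall>Y\<in>H. E (\<lambda>w. X w + Y w) \<le> E X + E Y) \<and>
     (\<forall>X\<in>H. \<forall>a\<ge>0. E (\<lambda>w. a * X w) = a * E X)"

text \<open>Abstract version of the G-framework on [0,T]: LG t plays the role of L^1_G(Omega_t),
  increasing in t, each a sublinear expectation space for E; LG T is closed under
  composition with random functions that are Lipschitz in the real argument.\<close>
definition G_framework :: "real \<Rightarrow> (real \<Rightarrow> ('w \<Rightarrow> real) set) \<Rightarrow> (('w \<Rightarrow> real) \<Rightarrow> real) \<Rightarrow> bool" where
  "G_framework T LG E \<longleftrightarrow>
     (\<forall>t\<in>{0..T}. sublinear_expectation (LG t) E) \<and>
     (\<forall>s t. 0 \<le> s \<and> s \<le> t \<and> t \<le> T \<longrightarrow> LG s \<subseteq> LG t) \<and>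
     (\<forall>X\<in>LG T. \<forall>f :: 'w \<Rightarrow> real \<Rightarrow> real.
        (\<forall>y. (\<lambda>w. f w y) \<in> LG T) \<and> (\<exists>c. \<forall>w y y'. \<bar>f w y - f w y'\<bar> \<le> c * \<bar>y - y'\<bar>)
        \<longrightarrow> (\<lambda>w. f w (X w)) \<in> LG T)"

definition C1G :: "real \<Rightarrow> (real \<Rightarrow> ('w \<Rightarrow> real) set) \<Rightarrow> (('w \<Rightarrow> real) \<Rightarrow> real) \<Rightarrow> (real \<Rightarrow> 'w \<Rightarrow> real) \<Rightarrow> bool" where
  "C1G T LG E Y \<longleftrightarrow>
     (\<forall>v\<in>{0..T}. Y v \<in> LG v) \<and>
     (\<forall>v\<in>{0..T}. \<forall>\<epsilon>>0. \<exists>\<delta>>0. \<forall>v'\<in>{0..T}. \<bar>v' - v\<bar> < \<delta> \<longrightarrow> E (\<lambda>w. \<bar>Y v' w - Y v w\<bar>) < \<epsilon>)"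

definition bounded_variation_on :: "(real \<Rightarrow> real) \<Rightarrow> real \<Rightarrow> real \<Rightarrow> bool" where
  "bounded_variation_on R a b \<longleftrightarrow>
     (\<exists>M. \<forall>xs. sorted xs \<and> set xs \<subseteq> {a..b} \<longrightarrow>
        (\<Sum>i<length xs - 1. \<bar>R (xs ! Suc i) - R (xs ! i)\<bar>) \<le> M)"

definition CTB :: "real \<Rightarrow> (real \<Rightarrow> real) \<Rightarrow> bool" where
  "CTB T R \<longleftrightarrow> continuous_on {0..T} R \<and> bounded_variation_on R 0 T \<and> R 0 = 0"

definition has_rs_integral :: "(real \<Rightarrow> real) \<Rightarrow> (real \<Rightarrow> real) \<Rightarrow> real \<Rightarrow> real \<Rightarrow> real \<Rightarrow> bool" where
  "has_rs_integral f R s t I \<longleftrightarrow>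
     (\<forall>\<epsilon>>0. \<exists>\<delta>>0. \<forall>xs \<xi>.
        xs \<noteq> [] \<and> sorted xs \<and> hd xs = s \<and> last xs = t \<and>
        (\<forall>i<length xs - 1. xs ! Suc i - xs ! i < \<delta> \<and> xs ! i \<le> \<xi> i \<and> \<xi> i \<le> xs ! Suc i)
        \<longrightarrow> \<bar>(\<Sum>i<length xs - 1. f (\<xi> i) * (R (xs ! Suc i) - R (xs ! i))) - I\<bar> < \<epsilon>)"

definition Hbar :: "(('w \<Rightarrow> real) \<Rightarrow> real) \<Rightarrow> (real \<Rightarrow> 'w \<Rightarrow> real \<Rightarrow> real) \<Rightarrow> real \<Rightarrow> real \<Rightarrow> ('w \<Rightarrow> real) \<Rightarrow> real" where
  "Hbar E hbar t x X = E (\<lambda>w. hbar t w (x + X w - E X))"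

definition Hinv :: "(('w \<Rightarrow> real) \<Rightarrow> real) \<Rightarrow> (real \<Rightarrow> 'w \<Rightarrow> real \<Rightarrow> real) \<Rightarrow> real \<Rightarrow> ('w \<Rightarrow> real) \<Rightarrow> real \<Rightarrow> real" where
  "Hinv E hbar t X c = (THE x. Hbar E hbar t x X = c)"

definition Lbar :: "(('w \<Rightarrow> real) \<Rightarrow> real) \<Rightarrow> (real \<Rightarrow> 'w \<Rightarrow> real \<Rightarrow> real) \<Rightarrow> (real \<Rightarrow> real) \<Rightarrow> real \<Rightarrow> ('w \<Rightarrow> real) \<Rightarrow> real" where
  "Lbar E hbar l t X = Hinv E hbar t X (l t)"

definition Ubar :: "(('w \<Rightarrow> real) \<Rightarrow> real) \<Rightarrow> (real \<Rightarrow> 'w \<Rightarrow> real \<Rightarrow> real) \<Rightarrow> (real \<Rightarrow> real) \<Rightarrow> real \<Rightarrow> ('w \<Rightarrow> real) \<Rightarrow> real" where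
  "Ubar E hbar u t X = Hinv E hbar t X (u t)"

definition BSP :: "real \<Rightarrow> (real \<Rightarrow> ('w \<Rightarrow> real) set) \<Rightarrow> (('w \<Rightarrow> real) \<Rightarrow> real) \<Rightarrow>
    (real \<Rightarrow> 'w \<Rightarrow> real \<Rightarrow> real) \<Rightarrow> (real \<Rightarrow> real) \<Rightarrow> (real \<Rightarrow> real) \<Rightarrow>
    (real \<Rightarrow> 'w \<Rightarrow> real) \<Rightarrow> (real \<Rightarrow> 'w \<Rightarrow> real) \<Rightarrow> (real \<Rightarrow> real) \<Rightarrow> bool" where
  "BSP T LG E hbar l u Ybar Y R \<longleftrightarrow>
     C1G T LG E Y \<and> CTB T R \<and>
     (\<forall>t\<in>{0..T}. \<forall>w. Y t w = Ybar t w + R T - R t) \<and>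
     (\<forall>t\<in>{0..T}. l t \<le> E (\<lambda>w. hbar t w (Y t w)) \<and> E (\<lambda>w. hbar t w (Y t w)) \<le> u t) \<and>
     (\<forall>s t. 0 \<le> s \<and> s \<le> t \<and> t \<le> T \<longrightarrow>
        (\<exists>I. has_rs_integral (\<lambda>v. E (\<lambda>w. hbar v w (Y v w)) - l v) R s t I \<and> I \<le> 0) \<and>
        (\<exists>I. has_rs_integral (\<lambda>v. E (\<lambda>w. hbar v w (Y v w)) - u v) R s t I \<and> I \<le> 0))"

end

theory Submission
  imports Defs
begin

text \<open>Write a solution as \<open>Y\<^sub>t = Ybar\<^sub>t - \<Lambda>\<^sub>t\<close> with the deterministic \<open>\<Lambda>\<^sub>t = R\<^sub>t - R\<^sub>T\<close>.
  Since \<open>hbar\<close> is increasing and bi-Lipschitz in \<open>y\<close>, the constraint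
  \<open>l\<^sub>t \<le> E[hbar(t, Y\<^sub>t)] \<le> u\<^sub>t\<close> is equivalent to \<open>\<theta>\<^sub>t \<le> \<Lambda>\<^sub>t \<le> \<psi>\<^sub>t\<close> for the continuous
  barriers \<open>\<theta>\<^sub>t = E[Ybar\<^sub>t] - U\<^sub>t(Ybar\<^sub>t)\<close> and \<open>\<psi>\<^sub>t = E[Ybar\<^sub>t] - L\<^sub>t(Ybar\<^sub>t)\<close>, which are a
  uniform distance apart. The conditions on the Stieltjes integrals say that \<open>\<Lambda>\<close> can increase
  only while it touches \<open>\<psi>\<close> and decrease only while it touches \<open>\<theta>\<close>, so the problem reduces to a
  deterministic backward Skorokhod problem with two barriers. Every solution of the latter
  satisfies the explicit max-min formula, which gives uniqueness, and a solution is built backwards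
  from \<open>T\<close> on short time cells, on each of which \<open>\<Lambda>\<close> is pushed by the running extremum of the
  nearer barrier.\<close>

section \<open>Riemann--Stieltjes integrals\<close>

definition rs_sum :: "(real \<Rightarrow> real) \<Rightarrow> (real \<Rightarrow> real) \<Rightarrow> real list \<Rightarrow> (nat \<Rightarrow> real) \<Rightarrow> real" where
  "rs_sum f R xs \<xi> = (\<Sum>i<length xs - 1. f (\<xi> i) * (R (xs ! Suc i) - R (xs ! i)))"

definition fine_tagged_partition :: "real \<Rightarrow> real \<Rightarrow> real \<Rightarrow> real list \<Rightarrow> (nat \<Rightarrow> real) \<Rightarrow> bool" where
  "fine_tagged_partition \<delta> s t xs \<xi> \<longleftrightarrow> xs \<noteq> [] \<and> sorted xs \<and> hd xs = s \<and> last xs = t \<and>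
     (\<forall>i<length xs - 1. xs ! Suc i - xs ! i < \<delta> \<and> xs ! i \<le> \<xi> i \<and> \<xi> i \<le> xs ! Suc i)"

lemma has_rs_integral_iff:
  "has_rs_integral f R s t I \<longleftrightarrow>
     (\<forall>\<epsilon>>0. \<exists>\<delta>>0. \<forall>xs \<xi>. fine_tagged_partition \<delta> s t xs \<xi> \<longrightarrow> \<bar>rs_sum f R xs \<xi> - I\<bar> < \<epsilon>)"
  unfolding has_rs_integral_def fine_tagged_partition_def rs_sum_def by (rule refl)

lemma fine_tagged_partition_mono:
  "fine_tagged_partition \<delta> s t xs \<xi> \<Longrightarrow> \<delta> \<le> \<delta>' \<Longrightarrow> fine_tagged_partition \<delta>' s t xs \<xi>"
  unfolding fine_tagged_partition_def by force

lemma fine_tagged_partition_nth_in: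
  assumes "fine_tagged_partition \<delta> s t xs \<xi>" "i < length xs"
  shows "xs ! i \<in> {s..t}"
proof -
  have "xs ! 0 \<le> xs ! i" "xs ! i \<le> xs ! (length xs - 1)"
    using assms unfolding fine_tagged_partition_def by (auto intro: sorted_nth_mono)
  then show ?thesis
    using assms unfolding fine_tagged_partition_def by (auto simp: hd_conv_nth last_conv_nth)
qed

lemma fine_tagged_partition_tag_in:
  assumes "fine_tagged_partition \<delta> s t xs \<xi>" "i < length xs - 1"
  shows "\<xi> i \<in> {s..t}"
  using assms fine_tagged_partition_nth_in[OF assms(1), of i] fine_tagged_partition_nth_in[OF assms(1), of "Suc i"]
  unfolding fine_tagged_partition_def by force

lemma rs_sum_cong:
  assumes "\<forall>x\<in>{s..t}. f x = g x" "\<forall>x\<in>{s..t}. R x = R' x + c" "fine_tagged_partition \<delta> s t xs \<xi>"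
  shows "rs_sum f R xs \<xi> = rs_sum g R' xs \<xi>"
  unfolding rs_sum_def
proof (rule sum.cong[OF refl])
  fix i assume "i \<in> {..<length xs - 1}"
  with assms show "f (\<xi> i) * (R (xs ! Suc i) - R (xs ! i)) = g (\<xi> i) * (R' (xs ! Suc i) - R' (xs ! i))"
    using fine_tagged_partition_tag_in fine_tagged_partition_nth_in[of \<delta> s t xs \<xi> i]
      fine_tagged_partition_nth_in[of \<delta> s t xs \<xi> "Suc i"] by auto
qed

lemma has_rs_integral_cong:
  assumes "\<forall>x\<in>{s..t}. f x = g x" "\<forall>x\<in>{s..t}. R x = R' x + c" "has_rs_integral f R s t I"
  shows "has_rs_integral g R' s t I"
  using assms(3) rs_sum_cong[OF assms(1,2)] unfolding has_rs_integral_iff by metis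

lemma has_rs_integral_diff_integrator:
  assumes "has_rs_integral f A s t I" "has_rs_integral f B s t J"
  shows "has_rs_integral f (\<lambda>v. A v - B v) s t (I - J)"
  unfolding has_rs_integral_iff
proof (intro allI impI)
  fix \<epsilon> :: real assume "\<epsilon> > 0"
  then obtain \<delta>1 \<delta>2 where "\<delta>1 > 0" "\<delta>2 > 0"
    and \<delta>1: "\<And>xs \<xi>. fine_tagged_partition \<delta>1 s t xs \<xi> \<Longrightarrow> \<bar>rs_sum f A xs \<xi> - I\<bar> < \<epsilon> / 2"
    and \<delta>2: "\<And>xs \<xi>. fine_tagged_partition \<delta>2 s t xs \<xi> \<Longrightarrow> \<bar>rs_sum f B xs \<xi> - J\<bar> < \<epsilon> / 2"
    using assms half_gt_zero unfolding has_rs_integral_iff by metis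
  have "\<bar>rs_sum f (\<lambda>v. A v - B v) xs \<xi> - (I - J)\<bar> < \<epsilon>"
    if "fine_tagged_partition (min \<delta>1 \<delta>2) s t xs \<xi>" for xs \<xi>
  proof -
    have "rs_sum f (\<lambda>v. A v - B v) xs \<xi> = rs_sum f A xs \<xi> - rs_sum f B xs \<xi>"
      unfolding rs_sum_def by (simp add: sum_subtractf[symmetric] algebra_simps)
    moreover have "\<bar>rs_sum f A xs \<xi> - I\<bar> < \<epsilon> / 2" "\<bar>rs_sum f B xs \<xi> - J\<bar> < \<epsilon> / 2"
      using \<delta>1 \<delta>2 fine_tagged_partition_mono[OF that] by auto
    ultimately show ?thesis by linarith
  qed
  then show "\<exists>\<delta>>0. \<forall>xs \<xi>. fine_tagged_partition \<delta> s t xs \<xi> \<longrightarrow>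
      \<bar>rs_sum f (\<lambda>v. A v - B v) xs \<xi> - (I - J)\<bar> < \<epsilon>"
    using \<open>\<delta>1 > 0\<close> \<open>\<delta>2 > 0\<close> by (metis min_less_iff_conj)
qed

lemma has_rs_integral_uminus:
  assumes "has_rs_integral f R s t I"
  shows "has_rs_integral (\<lambda>v. - f v) R s t (- I)"
proof -
  have "rs_sum (\<lambda>v. - f v) R xs \<xi> = - rs_sum f R xs \<xi>" for xs \<xi>
    unfolding rs_sum_def by (simp add: sum_negf)
  with assms show ?thesis
    unfolding has_rs_integral_iff by (simp add: abs_minus_commute)
qed

lemma has_rs_integral_uminus_integrator:
  assumes "has_rs_integral f R s t I"
  shows "has_rs_integral f (\<lambda>v. - R v) s t (- I)"
proof -
  have "rs_sum f (\<lambda>v. - R v) xs \<xi> = - rs_sum f R xs \<xi>" for xs \<xi>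
    unfolding rs_sum_def by (simp add: sum_negf[symmetric] algebra_simps)
  with assms show ?thesis
    unfolding has_rs_integral_iff by (simp add: abs_minus_commute)
qed

definition uniform_grid :: "real \<Rightarrow> real \<Rightarrow> nat \<Rightarrow> nat \<Rightarrow> real" where
  "uniform_grid s t K i = s + real i * ((t - s) / real K)"

lemma uniform_grid_0 [simp]: "uniform_grid s t K 0 = s"
  by (simp add: uniform_grid_def)

lemma uniform_grid_last: "K > 0 \<Longrightarrow> uniform_grid s t K K = t"
  by (simp add: uniform_grid_def)

lemma uniform_grid_Suc: "uniform_grid s t K (Suc i) = uniform_grid s t K i + (t - s) / K"
  unfolding uniform_grid_def by (simp add: distrib_right add_divide_distrib)

lemma uniform_grid_mono: "s \<le> t \<Longrightarrow> i \<le> j \<Longrightarrow> uniform_grid s t K i \<le> uniform_grid s t K j"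
  unfolding uniform_grid_def by (intro add_left_mono mult_right_mono) auto

lemma uniform_grid_in:
  assumes "s \<le> t" "i \<le> K"
  shows "uniform_grid s t K i \<in> {s..t}"
proof (cases "K = 0")
  case False
  have "real i * ((t - s) / K) \<le> real K * ((t - s) / K)"
    using assms by (intro mult_right_mono) auto
  then show ?thesis
    using assms False by (simp add: uniform_grid_def)
qed (use assms in \<open>simp add: uniform_grid_def\<close>)

lemma uniform_grid_nested:
  "K > 0 \<Longrightarrow> uniform_grid (uniform_grid p q N k) (uniform_grid p q N (Suc k)) K i = uniform_grid p q (N * K) (k * K + i)"
  by (cases "N = 0") (simp_all add: uniform_grid_def field_simps)

definition grid_variation :: "(real \<Rightarrow> real) \<Rightarrow> real \<Rightarrow> real \<Rightarrow> nat \<Rightarrow> real" where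
  "grid_variation R s t K = (\<Sum>i<K. \<bar>R (uniform_grid s t K (Suc i)) - R (uniform_grid s t K i)\<bar>)"

lemma grid_variation_nonneg: "0 \<le> grid_variation R s t K"
  by (simp add: grid_variation_def sum_nonneg)

lemma grid_variation_nested:
  assumes "K > 0"
  shows "(\<Sum>k<N. grid_variation R (uniform_grid p q N k) (uniform_grid p q N (Suc k)) K)
       = grid_variation R p q (N * K)"
proof -
  let ?G = "\<lambda>j. \<bar>R (uniform_grid p q (N * K) (Suc j)) - R (uniform_grid p q (N * K) j)\<bar>"
  have "(\<Sum>i<K. ?G (k * K + i)) = sum ?G {k * K..<k * K + K}" for k
    using sum.atLeastLessThan_shift_bounds[of ?G 0 "k * K" K] by (simp add: lessThan_atLeast0 add.commute)
  then show ?thesis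
    using sum.nat_group[of ?G K N] by (simp add: grid_variation_def uniform_grid_nested[OF assms])
qed

lemma has_rs_integral_grid:
  assumes "has_rs_integral f R s t I" "s \<le> t" "\<epsilon> > 0"
  shows "\<forall>\<^sub>F K in sequentially. \<forall>\<xi>. (\<forall>i<K. uniform_grid s t K i \<le> \<xi> i \<and> \<xi> i \<le> uniform_grid s t K (Suc i)) \<longrightarrow>
           \<bar>(\<Sum>i<K. f (\<xi> i) * (R (uniform_grid s t K (Suc i)) - R (uniform_grid s t K i))) - I\<bar> < \<epsilon>"
proof -
  obtain \<delta> where "\<delta> > 0" and \<delta>: "\<And>xs \<xi>. fine_tagged_partition \<delta> s t xs \<xi> \<Longrightarrow> \<bar>rs_sum f R xs \<xi> - I\<bar> < \<epsilon>"
    using assms(1,3) unfolding has_rs_integral_iff by blast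
  have "\<forall>\<^sub>F K in sequentially. (t - s) / real K < \<delta>"
    using lim_const_over_n \<open>\<delta> > 0\<close> by (rule order_tendstoD)
  moreover have "\<forall>\<^sub>F K in sequentially. K > 0"
    by (rule eventually_gt_at_top)
  ultimately show ?thesis
  proof eventually_elim
    case (elim K)
    let ?xs = "map (uniform_grid s t K) [0..<Suc K]"
    have nth: "?xs ! i = uniform_grid s t K i" if "i < Suc K" for i
      using that by (simp del: upt_Suc)
    show ?case
    proof (intro allI impI)
      fix \<xi> assume tags: "\<forall>i<K. uniform_grid s t K i \<le> \<xi> i \<and> \<xi> i \<le> uniform_grid s t K (Suc i)"
      have "sorted ?xs"
        unfolding sorted_iff_nth_mono using assms(2) by (simp add: uniform_grid_mono del: upt_Suc)
      then have "fine_tagged_partition \<delta> s t ?xs \<xi>"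
        unfolding fine_tagged_partition_def using elim tags
        by (simp add: hd_map last_map uniform_grid_last uniform_grid_Suc del: upt_Suc)
      moreover have "rs_sum f R ?xs \<xi> = (\<Sum>i<K. f (\<xi> i) * (R (uniform_grid s t K (Suc i)) - R (uniform_grid s t K i)))"
        unfolding rs_sum_def by (intro sum.cong) (simp_all add: nth del: upt_Suc)
      ultimately show "\<bar>(\<Sum>i<K. f (\<xi> i) * (R (uniform_grid s t K (Suc i)) - R (uniform_grid s t K i))) - I\<bar> < \<epsilon>"
        using \<delta> by metis
    qed
  qed
qed

lemma has_rs_integral_nonneg:
  assumes I: "has_rs_integral f F s t I" and "s \<le> t" and F: "mono_on {s..t} F"
    and f: "\<forall>v\<in>{s..t}. 0 \<le> f v"
  shows "0 \<le> I"
proof (rule field_le_epsilon)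
  fix \<epsilon> :: real assume "0 < \<epsilon>"
  from eventually_happens'[OF _ has_rs_integral_grid[OF I \<open>s \<le> t\<close> this]] obtain K where
    K: "\<forall>\<xi>. (\<forall>i<K. uniform_grid s t K i \<le> \<xi> i \<and> \<xi> i \<le> uniform_grid s t K (Suc i)) \<longrightarrow>
           \<bar>(\<Sum>i<K. f (\<xi> i) * (F (uniform_grid s t K (Suc i)) - F (uniform_grid s t K i))) - I\<bar> < \<epsilon>"
    by auto
  have "0 \<le> (\<Sum>i<K. f (uniform_grid s t K i) * (F (uniform_grid s t K (Suc i)) - F (uniform_grid s t K i)))"
  proof (intro sum_nonneg mult_nonneg_nonneg)
    fix i assume "i \<in> {..<K}"
    then have "uniform_grid s t K i \<in> {s..t}" "uniform_grid s t K (Suc i) \<in> {s..t}"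
      using uniform_grid_in \<open>s \<le> t\<close> by auto
    then show "0 \<le> f (uniform_grid s t K i)" "0 \<le> F (uniform_grid s t K (Suc i)) - F (uniform_grid s t K i)"
      using f F uniform_grid_mono[OF \<open>s \<le> t\<close>, of i "Suc i" K] by (auto simp: mono_on_def)
  qed
  moreover have "\<bar>(\<Sum>i<K. f (uniform_grid s t K i) * (F (uniform_grid s t K (Suc i)) - F (uniform_grid s t K i))) - I\<bar> < \<epsilon>"
    using K uniform_grid_mono[OF \<open>s \<le> t\<close>] by simp
  ultimately show "0 \<le> I + \<epsilon>" by linarith
qed

text \<open>Tagging every grid cell on which \<open>F\<close> increases at a zero of \<open>f\<close> makes the Riemann--Stieltjes
  sum vanish.\<close>
lemma has_rs_integral_eq_0:
  assumes I: "has_rs_integral f F s t I" and "s \<le> t" and F: "mono_on {s..t} F"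
    and flat: "\<forall>x y. s \<le> x \<and> x \<le> y \<and> y \<le> t \<and> F x < F y \<longrightarrow> (\<exists>w\<in>{x..y}. f w = 0)"
  shows "I = 0"
proof -
  have "\<bar>I\<bar> \<le> 0 + \<epsilon>" if "0 < \<epsilon>" for \<epsilon>
  proof -
    from eventually_happens'[OF _ has_rs_integral_grid[OF I \<open>s \<le> t\<close> that]] obtain K where
      K: "\<And>\<xi>. \<forall>i<K. uniform_grid s t K i \<le> \<xi> i \<and> \<xi> i \<le> uniform_grid s t K (Suc i) \<Longrightarrow>
             \<bar>(\<Sum>i<K. f (\<xi> i) * (F (uniform_grid s t K (Suc i)) - F (uniform_grid s t K i))) - I\<bar> < \<epsilon>"
      by auto
    let ?g = "uniform_grid s t K"
    have "\<exists>w. ?g i \<le> w \<and> w \<le> ?g (Suc i) \<and> f w * (F (?g (Suc i)) - F (?g i)) = 0"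
      if "i \<in> {..<K}" for i
    proof -
      have g: "s \<le> ?g i" "?g i \<le> ?g (Suc i)" "?g (Suc i) \<le> t"
        using uniform_grid_in[OF \<open>s \<le> t\<close>, of i K] uniform_grid_in[OF \<open>s \<le> t\<close>, of "Suc i" K]
          uniform_grid_mono[OF \<open>s \<le> t\<close>, of i "Suc i" K] that by auto
      show ?thesis
      proof (cases "F (?g i) < F (?g (Suc i))")
        case True
        then obtain w where "w \<in> {?g i..?g (Suc i)}" "f w = 0"
          using flat g by blast
        then show ?thesis by auto
      next
        case False
        moreover have "F (?g i) \<le> F (?g (Suc i))"
          using g by (intro mono_onD[OF F]) auto
        ultimately show ?thesis using g(2) by auto
      qed
    qed
    then obtain \<xi> where \<xi>: "\<forall>i\<in>{..<K}. ?g i \<le> \<xi> i \<and> \<xi> i \<le> ?g (Suc i) \<and>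
        f (\<xi> i) * (F (?g (Suc i)) - F (?g i)) = 0"
      using bchoice[of "{..<K}"] by (metis (no_types, lifting))
    then have "(\<Sum>i<K. f (\<xi> i) * (F (?g (Suc i)) - F (?g i))) = 0"
      by (intro sum.neutral) blast
    with K[of \<xi>] \<xi> show ?thesis by simp
  qed
  then show ?thesis using field_le_epsilon[of "\<bar>I\<bar>" 0] by simp
qed

lemma rs_increment_le_grid_variation:
  assumes I: "\<exists>I. has_rs_integral f R s t I \<and> I \<le> 0" and "s \<le> t" "0 < \<epsilon>"
    and osc: "\<forall>x\<in>{s..t}. \<bar>f x - f s\<bar> \<le> \<eta>"
  shows "\<forall>\<^sub>F K in sequentially.
           f s * (R t - R s) < \<epsilon> + \<eta> * grid_variation R s t K"
proof -
  obtain I where "has_rs_integral f R s t I" "I \<le> 0" using I by blast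
  from has_rs_integral_grid[OF this(1) \<open>s \<le> t\<close> \<open>0 < \<epsilon>\<close>] eventually_gt_at_top[of 0]
  show ?thesis
  proof eventually_elim
    case (elim K)
    let ?g = "uniform_grid s t K"
    let ?d = "\<lambda>i. R (?g (Suc i)) - R (?g i)"
    have "\<forall>i<K. ?g i \<le> ?g i \<and> ?g i \<le> ?g (Suc i)"
      using uniform_grid_mono[OF \<open>s \<le> t\<close>] by simp
    then have "\<bar>(\<Sum>i<K. f (?g i) * ?d i) - I\<bar> < \<epsilon>"
      using elim by blast
    then have sum_lt: "(\<Sum>i<K. f (?g i) * ?d i) < \<epsilon>"
      using \<open>I \<le> 0\<close> by linarith
    have "f s * (R t - R s) = (\<Sum>i<K. f s * ?d i)"
      using sum_lessThan_telescope[of "\<lambda>i. R (?g i)" K] uniform_grid_last[of K s t] elim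
      by (simp add: sum_distrib_left[symmetric])
    also have "\<dots> \<le> (\<Sum>i<K. f (?g i) * ?d i + \<eta> * \<bar>?d i\<bar>)"
    proof (rule sum_mono)
      fix i assume "i \<in> {..<K}"
      then have "\<bar>f (?g i) - f s\<bar> \<le> \<eta>" using osc uniform_grid_in[OF \<open>s \<le> t\<close>, of i K] by auto
      then have "\<bar>(f s - f (?g i)) * ?d i\<bar> \<le> \<eta> * \<bar>?d i\<bar>"
        unfolding abs_mult by (intro mult_right_mono) (auto simp: abs_minus_commute)
      then show "f s * ?d i \<le> f (?g i) * ?d i + \<eta> * \<bar>?d i\<bar>"
        by (simp add: algebra_simps abs_le_iff)
    qed
    also have "\<dots> = (\<Sum>i<K. f (?g i) * ?d i) + \<eta> * (\<Sum>i<K. \<bar>?d i\<bar>)"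
      by (simp add: sum.distrib sum_distrib_left)
    finally show ?case using sum_lt by (simp add: grid_variation_def)
  qed
qed

lemma bounded_variation_on_grid:
  assumes "bounded_variation_on R p q" "p \<le> q"
  obtains M where "\<And>K. grid_variation R p q K \<le> M"
proof -
  obtain M where M: "\<And>xs. sorted xs \<Longrightarrow> set xs \<subseteq> {p..q} \<Longrightarrow>
      (\<Sum>i<length xs - 1. \<bar>R (xs ! Suc i) - R (xs ! i)\<bar>) \<le> M"
    using assms(1) unfolding bounded_variation_on_def by blast
  have "grid_variation R p q K \<le> M" for K
  proof -
    let ?xs = "map (uniform_grid p q K) [0..<Suc K]"
    have "sorted ?xs"
      unfolding sorted_iff_nth_mono using assms(2) by (simp add: uniform_grid_mono del: upt_Suc)
    moreover have "set ?xs \<subseteq> {p..q}"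
      using uniform_grid_in[OF assms(2)] by (simp del: upt_Suc add: image_subset_iff)
    ultimately have "(\<Sum>i<length ?xs - 1. \<bar>R (?xs ! Suc i) - R (?xs ! i)\<bar>) \<le> M"
      by (rule M)
    also have "(\<Sum>i<length ?xs - 1. \<bar>R (?xs ! Suc i) - R (?xs ! i)\<bar>)
        = grid_variation R p q K"
      unfolding grid_variation_def by (intro sum.cong) (simp_all del: upt_Suc)
    finally show ?thesis .
  qed
  then show ?thesis using that by blast
qed

lemma rs_grid_cells_increment_le:
  assumes "p \<le> q" "0 < N" "0 < \<eta>"
    and osc: "\<forall>k<N. \<forall>x\<in>{uniform_grid p q N k..uniform_grid p q N (Suc k)}. \<bar>f x - f (uniform_grid p q N k)\<bar> \<le> \<eta>"
    and I: "\<forall>s t. p \<le> s \<and> s \<le> t \<and> t \<le> q \<longrightarrow> (\<exists>I. has_rs_integral f R s t I \<and> I \<le> 0)"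
  shows "\<forall>\<^sub>F K in sequentially. \<forall>k\<in>{..<N}.
    f (uniform_grid p q N k) * (R (uniform_grid p q N (Suc k)) - R (uniform_grid p q N k)) <
      \<eta> / N + \<eta> * grid_variation R (uniform_grid p q N k) (uniform_grid p q N (Suc k)) K"
proof (intro eventually_ball_finite ballI)
  fix k assume "k \<in> {..<N}"
  then have "p \<le> uniform_grid p q N k" "uniform_grid p q N k \<le> uniform_grid p q N (Suc k)" "uniform_grid p q N (Suc k) \<le> q"
    using uniform_grid_in[OF \<open>p \<le> q\<close>, of k N] uniform_grid_in[OF \<open>p \<le> q\<close>, of "Suc k" N] uniform_grid_mono[OF \<open>p \<le> q\<close>, of k "Suc k" N]
    by auto
  with I osc \<open>k \<in> {..<N}\<close> \<open>0 < N\<close> \<open>0 < \<eta>\<close> show "\<forall>\<^sub>F K in sequentially.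
    f (uniform_grid p q N k) * (R (uniform_grid p q N (Suc k)) - R (uniform_grid p q N k)) <
      \<eta> / N + \<eta> * grid_variation R (uniform_grid p q N k) (uniform_grid p q N (Suc k)) K"
    by (intro rs_increment_le_grid_variation) auto
qed simp

text \<open>The refinements of the \<open>N\<close> cells by grids of the same size \<open>K\<close> join into one grid of \<open>N * K\<close>
  cells, so the error terms of \<open>rs_increment_le_grid_variation\<close> add up to at most \<open>\<eta>\<close> times
  the variation of \<open>R\<close>.\<close>
lemma rs_integral_nonpos_increment_le:
  assumes "0 < m" and f_ge: "\<forall>v\<in>{p..q}. m \<le> f v" and "p \<le> q" "0 < N" "0 < \<eta>"
    and osc: "\<forall>k<N. \<forall>x\<in>{uniform_grid p q N k..uniform_grid p q N (Suc k)}. \<bar>f x - f (uniform_grid p q N k)\<bar> \<le> \<eta>"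
    and I: "\<forall>s t. p \<le> s \<and> s \<le> t \<and> t \<le> q \<longrightarrow> (\<exists>I. has_rs_integral f R s t I \<and> I \<le> 0)"
    and M: "\<And>K. grid_variation R p q K \<le> M"
  shows "m * (R q - R p) \<le> \<eta> * (1 + M)"
proof -
  define y where "y = uniform_grid p q N"
  define V where "V k K = grid_variation R (y k) (y (Suc k)) K" for k K
  have "\<forall>\<^sub>F K in sequentially. 0 < K \<and>
      (\<forall>k\<in>{..<N}. f (y k) * (R (y (Suc k)) - R (y k)) < \<eta> / N + \<eta> * V k K)"
    using eventually_gt_at_top[of 0] rs_grid_cells_increment_le[OF assms(3-6) I]
    unfolding y_def V_def by (rule eventually_conj)
  then obtain K where "0 < K"
    and cell: "\<forall>k\<in>{..<N}. f (y k) * (R (y (Suc k)) - R (y k)) < \<eta> / N + \<eta> * V k K"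
    using eventually_happens'[OF sequentially_bot] by blast
  have cell': "m * (R (y (Suc k)) - R (y k)) \<le> \<eta> / N + \<eta> * V k K" if "k < N" for k
  proof (cases "R (y (Suc k)) - R (y k) \<le> 0")
    case True
    then have "m * (R (y (Suc k)) - R (y k)) \<le> 0"
      using \<open>0 < m\<close> by (simp add: mult_le_0_iff)
    moreover have "0 \<le> \<eta> / N + \<eta> * V k K"
      using \<open>0 < \<eta>\<close> grid_variation_nonneg by (simp add: V_def)
    ultimately show ?thesis by linarith
  next
    case False
    have "y k \<in> {p..q}" using uniform_grid_in[OF \<open>p \<le> q\<close>, of k N] that by (simp add: y_def)
    with False have "m * (R (y (Suc k)) - R (y k)) \<le> f (y k) * (R (y (Suc k)) - R (y k))"
      using f_ge by (intro mult_right_mono) auto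
    moreover have "f (y k) * (R (y (Suc k)) - R (y k)) < \<eta> / N + \<eta> * V k K"
      using cell that by blast
    ultimately show ?thesis by linarith
  qed
  have "m * (R q - R p) = (\<Sum>k<N. m * (R (y (Suc k)) - R (y k)))"
    using sum_lessThan_telescope[of "\<lambda>k. R (y k)" N] uniform_grid_last[OF \<open>0 < N\<close>]
    by (simp add: y_def sum_distrib_left[symmetric])
  also have "\<dots> \<le> (\<Sum>k<N. \<eta> / N + \<eta> * V k K)"
    by (intro sum_mono cell') simp
  also have "\<dots> = \<eta> + \<eta> * (\<Sum>k<N. V k K)"
    using \<open>0 < N\<close> by (simp add: sum.distrib sum_distrib_left)
  also have "(\<Sum>k<N. V k K) = grid_variation R p q (N * K)"
    unfolding V_def y_def by (rule grid_variation_nested[OF \<open>0 < K\<close>])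
  also have "\<eta> + \<eta> * \<dots> \<le> \<eta> * (1 + M)"
    using M[of "N * K"] \<open>0 < \<eta>\<close> by (simp add: distrib_left)
  finally show ?thesis .
qed

lemma rs_integral_nonpos_imp_decreasing:
  assumes f: "continuous_on {p..q} f" and f_pos: "\<forall>v\<in>{p..q}. 0 < f v" and "p \<le> q"
    and bv: "bounded_variation_on R p q"
    and I: "\<forall>s t. p \<le> s \<and> s \<le> t \<and> t \<le> q \<longrightarrow> (\<exists>I. has_rs_integral f R s t I \<and> I \<le> 0)"
  shows "R q \<le> R p"
proof -
  obtain v0 where "v0 \<in> {p..q}" and f_min: "\<forall>v\<in>{p..q}. f v0 \<le> f v"
    using continuous_attains_inf[OF compact_Icc _ f] \<open>p \<le> q\<close> by auto
  then have "0 < f v0" using f_pos by blast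
  obtain M where M: "\<And>K. grid_variation R p q K \<le> M"
    using bounded_variation_on_grid[OF bv \<open>p \<le> q\<close>] by blast
  have "0 \<le> M" using M[of 0] grid_variation_nonneg[of R p q 0] by linarith
  have "f v0 * (R q - R p) \<le> 0 + e" if "0 < e" for e
  proof -
    define \<eta> where "\<eta> = e / (1 + M)"
    have "0 < \<eta>" using \<open>0 < e\<close> \<open>0 \<le> M\<close> by (simp add: \<eta>_def)
    obtain \<delta> where "0 < \<delta>"
      and \<delta>: "\<forall>x\<in>{p..q}. \<forall>x'\<in>{p..q}. dist x' x < \<delta> \<longrightarrow> dist (f x') (f x) < \<eta>"
      using compact_uniformly_continuous[OF f compact_Icc] \<open>0 < \<eta>\<close>
      unfolding uniformly_continuous_on_def by meson
    have "\<forall>\<^sub>F N in sequentially. 0 < N \<and> (q - p) / real N < \<delta>"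
      using eventually_gt_at_top[of 0] order_tendstoD(2)[OF lim_const_over_n \<open>0 < \<delta>\<close>]
      by (rule eventually_conj)
    then obtain N where "0 < N" "(q - p) / real N < \<delta>"
      using eventually_happens'[OF sequentially_bot] by blast
    have "\<bar>f x - f (uniform_grid p q N k)\<bar> \<le> \<eta>" if "k < N" "x \<in> {uniform_grid p q N k..uniform_grid p q N (Suc k)}" for k x
    proof -
      have "uniform_grid p q N k \<in> {p..q}" "uniform_grid p q N (Suc k) \<in> {p..q}"
        using uniform_grid_in[OF \<open>p \<le> q\<close>] that(1) by auto
      moreover have "dist x (uniform_grid p q N k) < \<delta>"
        using that(2) \<open>(q - p) / real N < \<delta>\<close> by (simp add: uniform_grid_Suc dist_real_def)
      ultimately have "dist (f x) (f (uniform_grid p q N k)) < \<eta>" using \<delta> that(2) by auto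
      then show ?thesis by (simp add: dist_real_def)
    qed
    then have "f v0 * (R q - R p) \<le> \<eta> * (1 + M)"
      using \<open>0 < f v0\<close> f_min \<open>p \<le> q\<close> \<open>0 < N\<close> \<open>0 < \<eta>\<close> I M
      by (intro rs_integral_nonpos_increment_le) auto
    then show ?thesis using \<open>0 \<le> M\<close> by (simp add: \<eta>_def)
  qed
  then have "f v0 * (R q - R p) \<le> 0" by (rule field_le_epsilon)
  then show ?thesis using \<open>0 < f v0\<close> by (simp add: mult_le_0_iff)
qed

lemma bounded_variation_on_subset:
  "bounded_variation_on R a b \<Longrightarrow> a \<le> p \<Longrightarrow> q \<le> b \<Longrightarrow> bounded_variation_on R p q"
  unfolding bounded_variation_on_def by (meson atLeastatMost_subset_iff dual_order.trans order_refl)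

lemma bounded_variation_on_uminus:
  "bounded_variation_on R a b \<Longrightarrow> bounded_variation_on (\<lambda>v. - R v) a b"
  unfolding bounded_variation_on_def by (simp add: abs_minus_commute)

lemma bounded_variation_on_cong:
  assumes R: "\<forall>v\<in>{a..b}. R v = R' v + c" and "bounded_variation_on R' a b"
  shows "bounded_variation_on R a b"
proof -
  obtain M where M: "\<And>xs. sorted xs \<and> set xs \<subseteq> {a..b} \<Longrightarrow>
      (\<Sum>i<length xs - 1. \<bar>R' (xs ! Suc i) - R' (xs ! i)\<bar>) \<le> M"
    using assms(2) unfolding bounded_variation_on_def by blast
  show ?thesis
    unfolding bounded_variation_on_def
  proof (intro exI[of _ M] allI impI)
    fix xs :: "real list" assume xs: "sorted xs \<and> set xs \<subseteq> {a..b}"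
    have "(\<Sum>i<length xs - 1. \<bar>R (xs ! Suc i) - R (xs ! i)\<bar>) = (\<Sum>i<length xs - 1. \<bar>R' (xs ! Suc i) - R' (xs ! i)\<bar>)"
    proof (rule sum.cong[OF refl])
      fix i assume "i \<in> {..<length xs - 1}"
      then have "xs ! i \<in> set xs" "xs ! Suc i \<in> set xs" by simp_all
      then have "xs ! i \<in> {a..b}" "xs ! Suc i \<in> {a..b}" using xs by blast+
      then show "\<bar>R (xs ! Suc i) - R (xs ! i)\<bar> = \<bar>R' (xs ! Suc i) - R' (xs ! i)\<bar>" using R by simp
    qed
    then show "(\<Sum>i<length xs - 1. \<bar>R (xs ! Suc i) - R (xs ! i)\<bar>) \<le> M"
      using M[OF xs] by simp
  qed
qed

lemma bounded_variation_on_diff: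
  assumes "bounded_variation_on A a b" "bounded_variation_on B a b"
  shows "bounded_variation_on (\<lambda>v. A v - B v) a b"
proof -
  obtain MA where MA: "\<And>xs. sorted xs \<and> set xs \<subseteq> {a..b} \<Longrightarrow>
      (\<Sum>i<length xs - 1. \<bar>A (xs ! Suc i) - A (xs ! i)\<bar>) \<le> MA"
    using assms(1) unfolding bounded_variation_on_def by blast
  obtain MB where MB: "\<And>xs. sorted xs \<and> set xs \<subseteq> {a..b} \<Longrightarrow>
      (\<Sum>i<length xs - 1. \<bar>B (xs ! Suc i) - B (xs ! i)\<bar>) \<le> MB"
    using assms(2) unfolding bounded_variation_on_def by blast
  show ?thesis
    unfolding bounded_variation_on_def
  proof (intro exI[of _ "MA + MB"] allI impI)
    fix xs :: "real list" assume xs: "sorted xs \<and> set xs \<subseteq> {a..b}"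
    have "(\<Sum>i<length xs - 1. \<bar>(A (xs ! Suc i) - B (xs ! Suc i)) - (A (xs ! i) - B (xs ! i))\<bar>)
        \<le> (\<Sum>i<length xs - 1. \<bar>A (xs ! Suc i) - A (xs ! i)\<bar> + \<bar>B (xs ! Suc i) - B (xs ! i)\<bar>)"
      by (intro sum_mono) linarith
    also have "\<dots> \<le> MA + MB"
      using MA[OF xs] MB[OF xs] by (simp add: sum.distrib)
    finally show "(\<Sum>i<length xs - 1. \<bar>(A (xs ! Suc i) - B (xs ! Suc i)) - (A (xs ! i) - B (xs ! i))\<bar>) \<le> MA + MB" .
  qed
qed

lemma bounded_variation_on_mono:
  assumes A: "mono_on {a..b} A"
  shows "bounded_variation_on A a b"
  unfolding bounded_variation_on_def
proof (intro exI allI impI)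
  fix xs :: "real list" assume xs: "sorted xs \<and> set xs \<subseteq> {a..b}"
  have xs_in: "xs ! i \<in> {a..b}" if "i < length xs" for i
    using xs that nth_mem by blast
  have step: "A (xs ! i) \<le> A (xs ! Suc i)" if "i < length xs - 1" for i
    using xs_in[of i] xs_in[of "Suc i"] xs that by (intro mono_onD[OF A]) (auto intro: sorted_nth_mono)
  show "(\<Sum>i<length xs - 1. \<bar>A (xs ! Suc i) - A (xs ! i)\<bar>) \<le> \<bar>A b - A a\<bar>"
  proof (cases "xs = []")
    case False
    have "(\<Sum>i<length xs - 1. \<bar>A (xs ! Suc i) - A (xs ! i)\<bar>) = (\<Sum>i<length xs - 1. A (xs ! Suc i) - A (xs ! i))"
      using step by (intro sum.cong refl) simp
    also have "\<dots> = A (xs ! (length xs - 1)) - A (xs ! 0)"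
      by (rule sum_lessThan_telescope)
    also have "\<dots> \<le> A b - A a"
      using xs_in[of 0] xs_in[of "length xs - 1"] False
      by (intro diff_mono mono_onD[OF A]) auto
    finally show ?thesis by linarith
  qed simp
qed

lemma set_integrable_interval_measure:
  fixes F g :: "real \<Rightarrow> real"
  assumes "mono F" "\<And>x. continuous (at_right x) F" and g: "continuous_on UNIV g" and "a \<le> b"
  shows "set_integrable (interval_measure F) {a<..b} g"
proof -
  have "compact (g ` {a..b})"
    by (rule compact_continuous_image[OF continuous_on_subset[OF g] compact_Icc]) auto
  then obtain B where B: "\<forall>x\<in>{a..b}. norm (g x) \<le> B"
    using compact_imp_bounded bounded_iff by (metis imageI)
  show ?thesis
    unfolding set_integrable_def
  proof (rule integrableI_bounded_set_indicator[where B=B])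
    show "g \<in> borel_measurable (interval_measure F)"
      unfolding measurable_cong_sets[OF sets_interval_measure refl]
      by (rule borel_measurable_continuous_onI[OF g])
    show "emeasure (interval_measure F) {a<..b} < \<infinity>"
      using emeasure_interval_measure_Ioc[OF \<open>a \<le> b\<close>] assms(1,2) by (simp add: monoD)
    show "AE x\<in>{a<..b} in interval_measure F. norm (g x) \<le> B"
      using B by (intro AE_I2) auto
  qed simp
qed

lemma interval_measure_set_integral_approx:
  fixes F f :: "real \<Rightarrow> real"
  assumes F: "mono F" "\<And>x. continuous (at_right x) F" and f: "continuous_on UNIV f" and "a \<le> b"
    and close: "\<forall>x\<in>{a<..b}. \<bar>f x - y\<bar> \<le> \<eta>"
  shows "\<bar>(\<integral>x\<in>{a<..b}. f x \<partial>interval_measure F) - y * (F b - F a)\<bar> \<le> \<eta> * (F b - F a)"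
proof -
  let ?\<mu> = "interval_measure F"
  have F_mono: "\<And>x y. x \<le> y \<Longrightarrow> F x \<le> F y" using F(1) by (simp add: monoD)
  have int: "set_integrable ?\<mu> {a<..b} g" if "continuous_on UNIV g" for g :: "real \<Rightarrow> real"
    by (rule set_integrable_interval_measure[OF F that \<open>a \<le> b\<close>])
  have fin: "emeasure ?\<mu> {a<..b} \<noteq> \<infinity>"
    using emeasure_interval_measure_Ioc[OF \<open>a \<le> b\<close> F_mono F(2)] by simp
  have const: "(\<integral>x\<in>{a<..b}. c \<partial>?\<mu>) = c * (F b - F a)" for c
    using set_integral_const[OF _ fin, of c] measure_interval_measure_Ioc[OF \<open>a \<le> b\<close> F_mono F(2)]
    by simp
  have "(\<integral>x\<in>{a<..b}. f x \<partial>?\<mu>) - y * (F b - F a) = (\<integral>x\<in>{a<..b}. f x - y \<partial>?\<mu>)"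
    using set_integral_diff(2)[OF int[OF f] int[of "\<lambda>_. y"]] const[of y] by simp
  moreover have "f x - y \<le> \<eta>" "- \<eta> \<le> f x - y" if "x \<in> {a<..b}" for x
    using abs_le_D1[OF close[rule_format, OF that]] abs_le_D2[OF close[rule_format, OF that]] by linarith+
  then have "(\<integral>x\<in>{a<..b}. f x - y \<partial>?\<mu>) \<le> (\<integral>x\<in>{a<..b}. \<eta> \<partial>?\<mu>)"
    and "(\<integral>x\<in>{a<..b}. - \<eta> \<partial>?\<mu>) \<le> (\<integral>x\<in>{a<..b}. f x - y \<partial>?\<mu>)"
    by (intro set_integral_mono int continuous_intros f; simp)+
  ultimately show ?thesis
    using const[of \<eta>] const[of "- \<eta>"] by (simp add: abs_le_iff)
qed

lemma interval_measure_set_integral_partition: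
  fixes F f :: "real \<Rightarrow> real"
  assumes F: "mono F" "\<And>x. continuous (at_right x) F" and f: "continuous_on UNIV f"
    and "xs \<noteq> []" "sorted xs"
  shows "(\<Sum>i<length xs - 1. \<integral>x\<in>{xs ! i<..xs ! Suc i}. f x \<partial>interval_measure F)
       = (\<integral>x\<in>{hd xs<..last xs}. f x \<partial>interval_measure F)"
  using assms(4,5)
proof (induction xs)
  case (Cons x ys)
  show ?case
  proof (cases "ys = []")
    case False
    then have "x \<le> hd ys" "hd ys \<le> last ys"
      using Cons.prems by (auto simp: sorted_wrt_append hd_conv_nth last_conv_nth sorted_nth_mono)
    then have "{x<..last ys} = {x<..hd ys} \<union> {hd ys<..last ys}" "{x<..hd ys} \<inter> {hd ys<..last ys} = {}"
      by auto
    then have "(\<integral>z\<in>{x<..last ys}. f z \<partial>interval_measure F)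
        = (\<integral>z\<in>{x<..hd ys}. f z \<partial>interval_measure F) + (\<integral>z\<in>{hd ys<..last ys}. f z \<partial>interval_measure F)"
      using \<open>x \<le> hd ys\<close> \<open>hd ys \<le> last ys\<close>
      by (simp add: set_integral_Un set_integrable_interval_measure[OF F f])
    moreover obtain n where "length ys = Suc n" using False by (cases ys) auto
    then have "(\<Sum>i<length (x # ys) - 1. \<integral>z\<in>{(x # ys) ! i<..(x # ys) ! Suc i}. f z \<partial>interval_measure F)
        = (\<integral>z\<in>{x<..hd ys}. f z \<partial>interval_measure F)
          + (\<Sum>i<length ys - 1. \<integral>z\<in>{ys ! i<..ys ! Suc i}. f z \<partial>interval_measure F)"
      using False by (simp del: sum.lessThan_Suc add: sum.lessThan_Suc_shift hd_conv_nth)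
    ultimately show ?thesis
      using Cons False by simp
  qed (simp add: set_lebesgue_integral_def)
qed simp

lemma rs_sum_interval_measure_approx:
  fixes f F :: "real \<Rightarrow> real"
  assumes F: "mono F" "\<And>x. continuous (at_right x) F" and f: "continuous_on UNIV f"
    and P: "fine_tagged_partition \<delta> s t xs \<xi>"
    and osc: "\<forall>x\<in>{s..t}. \<forall>x'\<in>{s..t}. dist x' x < \<delta> \<longrightarrow> dist (f x') (f x) < \<eta>"
  shows "\<bar>rs_sum f F xs \<xi> - (\<integral>x\<in>{s<..t}. f x \<partial>interval_measure F)\<bar> \<le> \<eta> * (F t - F s)"
proof -
  let ?J = "\<lambda>a b. \<integral>x\<in>{a<..b}. f x \<partial>interval_measure F"
  let ?n = "length xs - 1"
  have xs: "xs \<noteq> []" "sorted xs" "hd xs = s" "last xs = t"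
    and cells: "\<And>i. i < ?n \<Longrightarrow> xs ! Suc i - xs ! i < \<delta> \<and> xs ! i \<le> \<xi> i \<and> \<xi> i \<le> xs ! Suc i"
    using P unfolding fine_tagged_partition_def by auto
  have cell: "\<bar>f (\<xi> i) * (F (xs ! Suc i) - F (xs ! i)) - ?J (xs ! i) (xs ! Suc i)\<bar>
      \<le> \<eta> * (F (xs ! Suc i) - F (xs ! i))" if i: "i < ?n" for i
  proof -
    have "xs ! i \<in> {s..t}" "xs ! Suc i \<in> {s..t}"
      using fine_tagged_partition_nth_in[OF P] i by auto
    have "\<bar>f x - f (\<xi> i)\<bar> \<le> \<eta>" if x: "x \<in> {xs ! i<..xs ! Suc i}" for x
    proof -
      have "x \<in> {s..t}" "\<xi> i \<in> {s..t}" "dist x (\<xi> i) < \<delta>"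
        using x cells[OF i] \<open>xs ! i \<in> {s..t}\<close> \<open>xs ! Suc i \<in> {s..t}\<close> by (auto simp: dist_real_def)
      then have "dist (f x) (f (\<xi> i)) < \<eta>" using osc by blast
      then show ?thesis by (simp add: dist_real_def)
    qed
    then have "\<forall>x\<in>{xs ! i<..xs ! Suc i}. \<bar>f x - f (\<xi> i)\<bar> \<le> \<eta>" by blast
    from interval_measure_set_integral_approx[OF F f _ this] cells[OF i]
    show ?thesis by (simp add: abs_minus_commute)
  qed
  have "\<bar>rs_sum f F xs \<xi> - ?J s t\<bar>
      = \<bar>\<Sum>i<?n. f (\<xi> i) * (F (xs ! Suc i) - F (xs ! i)) - ?J (xs ! i) (xs ! Suc i)\<bar>"
    using interval_measure_set_integral_partition[OF F f xs(1,2)] xs(3,4)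
    by (simp add: rs_sum_def sum_subtractf)
  also have "\<dots> \<le> (\<Sum>i<?n. \<eta> * (F (xs ! Suc i) - F (xs ! i)))"
    by (rule order_trans[OF sum_abs sum_mono]) (simp add: cell)
  also have "\<dots> = \<eta> * (F t - F s)"
    using sum_lessThan_telescope[of "\<lambda>i. F (xs ! i)" ?n] xs
    by (simp add: sum_distrib_left[symmetric] hd_conv_nth last_conv_nth)
  finally show ?thesis .
qed

lemma has_rs_integral_interval_measure:
  fixes f F :: "real \<Rightarrow> real"
  assumes f: "continuous_on UNIV f" and F: "continuous_on UNIV F" "mono F" and "s \<le> t"
  shows "has_rs_integral f F s t (\<integral>x\<in>{s<..t}. f x \<partial>interval_measure F)"
  unfolding has_rs_integral_iff
proof (intro allI impI)
  fix \<epsilon> :: real assume "\<epsilon> > 0"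
  have rc: "\<And>x. continuous (at_right x) F"
    using F(1) continuous_on_eq_continuous_at[OF open_UNIV] continuous_at_imp_continuous_at_within
    by blast
  have "F s \<le> F t" using F(2) \<open>s \<le> t\<close> by (simp add: monoD)
  define \<eta> where "\<eta> = \<epsilon> / (2 * (F t - F s + 1))"
  have "0 < \<eta>" using \<open>\<epsilon> > 0\<close> \<open>F s \<le> F t\<close> by (simp add: \<eta>_def)
  have "\<eta> * (F t - F s) < \<eta> * (2 * (F t - F s + 1))"
    using \<open>0 < \<eta>\<close> \<open>F s \<le> F t\<close> by (intro mult_strict_left_mono) auto
  also have "\<dots> = \<epsilon>" using \<open>F s \<le> F t\<close> by (simp add: \<eta>_def)
  finally have "\<eta> * (F t - F s) < \<epsilon>" .
  obtain \<delta> where "\<delta> > 0" and \<delta>: "\<forall>x\<in>{s..t}. \<forall>x'\<in>{s..t}. dist x' x < \<delta> \<longrightarrow> dist (f x') (f x) < \<eta>"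
    using compact_uniformly_continuous[OF continuous_on_subset[OF f] compact_Icc] \<open>0 < \<eta>\<close>
    unfolding uniformly_continuous_on_def by (meson top_greatest)
  show "\<exists>\<delta>>0. \<forall>xs \<xi>. fine_tagged_partition \<delta> s t xs \<xi> \<longrightarrow>
      \<bar>rs_sum f F xs \<xi> - (\<integral>x\<in>{s<..t}. f x \<partial>interval_measure F)\<bar> < \<epsilon>"
    using rs_sum_interval_measure_approx[OF F(2) rc f _ \<delta>] \<open>\<eta> * (F t - F s) < \<epsilon>\<close> \<open>\<delta> > 0\<close>
    by (meson order_le_less_trans)
qed

lemma has_rs_integral_exists:
  fixes f F :: "real \<Rightarrow> real"
  assumes f: "continuous_on {s..t} f" and F: "continuous_on {s..t} F" "mono_on {s..t} F" and "s \<le> t"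
  shows "\<exists>I. has_rs_integral f F s t I"
proof -
  define c where "c x = max s (min t x)" for x
  have c: "continuous_on UNIV c" "\<And>x. c x \<in> {s..t}" "\<And>x. x \<in> {s..t} \<Longrightarrow> c x = x"
    unfolding c_def using \<open>s \<le> t\<close> by (auto intro!: continuous_intros)
  have "mono (F \<circ> c)"
    by (rule monoI) (use c(2) in \<open>auto simp: c_def intro!: mono_onD[OF F(2)]\<close>)
  moreover have "continuous_on UNIV (f \<circ> c)" "continuous_on UNIV (F \<circ> c)"
    by (rule continuous_on_compose[OF c(1) continuous_on_subset[OF f]]
        continuous_on_compose[OF c(1) continuous_on_subset[OF F(1)]]; use c(2) in blast)+
  ultimately have "has_rs_integral (f \<circ> c) (F \<circ> c) s t (\<integral>x\<in>{s<..t}. (f \<circ> c) x \<partial>interval_measure (F \<circ> c))"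
    using \<open>s \<le> t\<close> by (intro has_rs_integral_interval_measure)
  then show ?thesis
    using has_rs_integral_cong[of s t "f \<circ> c" f "F \<circ> c" F 0] c(3) by auto
qed

lemma rs_integral_nonpos_of_decomposition:
  assumes "s \<le> t" and f: "continuous_on {s..t} f" "\<forall>v\<in>{s..t}. 0 \<le> f v"
    and A: "continuous_on {s..t} A" "mono_on {s..t} A" and B: "continuous_on {s..t} B" "mono_on {s..t} B"
    and R: "\<forall>v\<in>{s..t}. R v = A v - B v + c"
    and flat: "\<forall>x y. s \<le> x \<and> x \<le> y \<and> y \<le> t \<and> A x < A y \<longrightarrow> (\<exists>w\<in>{x..y}. f w = 0)"
  shows "\<exists>I. has_rs_integral f R s t I \<and> I \<le> 0"
proof -
  obtain IA IB where IA: "has_rs_integral f A s t IA" and IB: "has_rs_integral f B s t IB"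
    using has_rs_integral_exists[OF f(1) A(1,2) \<open>s \<le> t\<close>] has_rs_integral_exists[OF f(1) B(1,2) \<open>s \<le> t\<close>]
    by blast
  have "IA = 0" by (rule has_rs_integral_eq_0[OF IA \<open>s \<le> t\<close> A(2) flat])
  moreover have "0 \<le> IB" by (rule has_rs_integral_nonneg[OF IB \<open>s \<le> t\<close> B(2) f(2)])
  moreover have "\<forall>v\<in>{s..t}. A v - B v = R v + (- c)" using R by auto
  then have "has_rs_integral f R s t (IA - IB)"
    by (intro has_rs_integral_cong[OF _ _ has_rs_integral_diff_integrator[OF IA IB]]) auto
  ultimately show ?thesis by force
qed

section \<open>The deterministic backward Skorokhod problem\<close>

lemma continuous_left_limit_le:
  fixes g :: "real \<Rightarrow> real"
  assumes "continuous_on {p..q} g" "p < q" "\<forall>x\<in>{p..<q}. g x \<le> c"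
  shows "g q \<le> c"
proof (rule tendsto_upperbound)
  have "(g \<longlongrightarrow> g q) (at q within {p..q})"
    using assms(1,2) by (auto simp: continuous_on_def)
  then show "(g \<longlongrightarrow> g q) (at_left q)"
    by (simp add: at_within_Icc_at_left[OF assms(2)])
  show "\<forall>\<^sub>F x in at_left q. g x \<le> c"
    using eventually_at_left_real[OF assms(2)] by eventually_elim (use assms(3) in auto)
qed simp

text \<open>The deterministic backward Skorokhod problem for \<open>\<Lambda>\<^sub>t = R\<^sub>t - R\<^sub>T\<close> between the barriers \<open>\<theta> \<le> \<psi>\<close>;
  the monotonicity conditions replace the minimality conditions on the Stieltjes integrals.\<close>
definition backward_skorokhod :: "(real \<Rightarrow> real) \<Rightarrow> (real \<Rightarrow> real) \<Rightarrow> real \<Rightarrow> (real \<Rightarrow> real) \<Rightarrow> bool" where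
  "backward_skorokhod \<theta> \<psi> T \<Lambda> \<longleftrightarrow>
     continuous_on {0..T} \<Lambda> \<and> (\<forall>v\<in>{0..T}. \<theta> v \<le> \<Lambda> v \<and> \<Lambda> v \<le> \<psi> v) \<and> \<Lambda> T = 0 \<and>
     (\<forall>p q. 0 \<le> p \<and> p \<le> q \<and> q \<le> T \<and> (\<forall>v\<in>{p..q}. \<Lambda> v < \<psi> v) \<longrightarrow> \<Lambda> q \<le> \<Lambda> p) \<and>
     (\<forall>p q. 0 \<le> p \<and> p \<le> q \<and> q \<le> T \<and> (\<forall>v\<in>{p..q}. \<theta> v < \<Lambda> v) \<longrightarrow> \<Lambda> p \<le> \<Lambda> q)"

lemma backward_skorokhod_decreasing_Ico:
  assumes S: "backward_skorokhod \<theta> \<psi> T \<Lambda>" and "0 \<le> p" "p \<le> q" "q \<le> T"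
    and below: "\<forall>v\<in>{p..<q}. \<Lambda> v < \<psi> v"
  shows "\<Lambda> q \<le> \<Lambda> p"
proof (cases "p = q")
  case False
  have "\<Lambda> x \<le> \<Lambda> p" if "x \<in> {p..<q}" for x
    using S below that \<open>0 \<le> p\<close> \<open>q \<le> T\<close> unfolding backward_skorokhod_def by auto
  moreover have "continuous_on {p..q} \<Lambda>"
    using S \<open>0 \<le> p\<close> \<open>q \<le> T\<close> unfolding backward_skorokhod_def by (auto elim: continuous_on_subset)
  ultimately show ?thesis
    using continuous_left_limit_le[of p q \<Lambda>] \<open>p \<le> q\<close> False by auto
qed simp

lemma backward_skorokhod_increasing_Ico:
  assumes S: "backward_skorokhod \<theta> \<psi> T \<Lambda>" and "0 \<le> p" "p \<le> q" "q \<le> T"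
    and above: "\<forall>v\<in>{p..<q}. \<theta> v < \<Lambda> v"
  shows "\<Lambda> p \<le> \<Lambda> q"
proof (cases "p = q")
  case False
  have le: "- \<Lambda> x \<le> - \<Lambda> p" if "x \<in> {p..<q}" for x
    using S above that \<open>0 \<le> p\<close> \<open>q \<le> T\<close> unfolding backward_skorokhod_def by auto
  have "continuous_on {p..q} \<Lambda>"
    using S \<open>0 \<le> p\<close> \<open>q \<le> T\<close> unfolding backward_skorokhod_def by (auto elim: continuous_on_subset)
  then have "- \<Lambda> q \<le> - \<Lambda> p"
    using le \<open>p \<le> q\<close> False by (intro continuous_left_limit_le continuous_on_minus) auto
  then show ?thesis by simp
qed simp

lemma bdd_below_image_Icc:
  fixes f :: "real \<Rightarrow> real"
  shows "continuous_on {a..b} f \<Longrightarrow> bdd_below (f ` {a..b})"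
  by (intro bounded_imp_bdd_below compact_imp_bounded compact_continuous_image compact_Icc)

lemma bdd_above_image_Icc:
  fixes f :: "real \<Rightarrow> real"
  shows "continuous_on {a..b} f \<Longrightarrow> bdd_above (f ` {a..b})"
  by (intro bounded_imp_bdd_above compact_imp_bounded compact_continuous_image compact_Icc)

lemma first_hitting_time:
  fixes g :: "real \<Rightarrow> real"
  assumes "continuous_on {a..b} g" "s \<in> {a..b}" "g s \<le> c"
  obtains r where "r \<in> {a..s}" "g r \<le> c" "\<forall>w\<in>{a..<r}. c < g w"
proof -
  define A where "A = {a..s} \<inter> g -` {..c}"
  have "closed A"
    unfolding A_def using assms(1,2) by (intro continuous_closed_preimage) (auto elim: continuous_on_subset)
  moreover have "s \<in> A" "bdd_below A"
    using assms(2,3) unfolding A_def by (auto simp: bdd_below_def)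
  ultimately have "Inf A \<in> A" using closed_contains_Inf by blast
  moreover have "c < g w" if "w \<in> {a..<Inf A}" for w
  proof -
    have "w \<notin> A" using that cInf_lower[OF _ \<open>bdd_below A\<close>, of w] by force
    then show ?thesis using that \<open>Inf A \<in> A\<close> unfolding A_def by auto
  qed
  ultimately show ?thesis
    by (intro that[of "Inf A"]) (auto simp: A_def)
qed

text \<open>Before the first time \<open>\<tau> \<ge> t\<close> with \<open>m \<le> \<Lambda> \<tau>\<close> the path stays below \<open>m \<le> \<psi>\<close>, so \<open>\<Lambda> \<tau> \<le> \<Lambda> t\<close>.\<close>
lemma backward_skorokhod_level_ge:
  assumes S: "backward_skorokhod \<theta> \<psi> T \<Lambda>" and "0 \<le> t" "t \<le> s" "s \<le> T"
    and "m \<le> \<Lambda> s" and m_le: "\<forall>v\<in>{t..s}. m \<le> \<psi> v"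
  shows "m \<le> \<Lambda> t"
proof -
  have "continuous_on {t..s} (\<lambda>v. - \<Lambda> v)"
    using S \<open>0 \<le> t\<close> \<open>s \<le> T\<close> unfolding backward_skorokhod_def
    by (intro continuous_on_minus) (auto elim: continuous_on_subset)
  then obtain \<tau> where \<tau>: "\<tau> \<in> {t..s}" "m \<le> \<Lambda> \<tau>" and below: "\<forall>v\<in>{t..<\<tau>}. \<Lambda> v < m"
    using first_hitting_time[of t s "\<lambda>v. - \<Lambda> v" s "- m"] \<open>t \<le> s\<close> \<open>m \<le> \<Lambda> s\<close> by auto
  have "\<Lambda> v < \<psi> v" if "v \<in> {t..<\<tau>}" for v
  proof -
    have "v \<in> {t..s}" using that \<tau>(1) by auto
    then show ?thesis using below m_le that by (blast intro: less_le_trans)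
  qed
  then have "\<Lambda> \<tau> \<le> \<Lambda> t"
    using \<tau>(1) \<open>0 \<le> t\<close> \<open>s \<le> T\<close> by (intro backward_skorokhod_decreasing_Ico[OF S]) auto
  then show ?thesis using \<tau> by linarith
qed

lemma backward_skorokhod_ge:
  assumes S: "backward_skorokhod \<theta> \<psi> T \<Lambda>" and \<psi>: "continuous_on {0..T} \<psi>"
    and "\<theta> T \<le> 0" and t: "0 \<le> t" "t \<le> T"
  shows "max (min (max (\<theta> T) 0) (INF v\<in>{t..T}. \<psi> v)) (SUP s\<in>{t..T}. min (\<theta> s) (INF v\<in>{t..s}. \<psi> v))
           \<le> \<Lambda> t"
proof -
  have INF_le: "(INF v\<in>{t..s}. \<psi> v) \<le> \<psi> x" if "s \<le> T" "x \<in> {t..s}" for s x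
    using that t by (intro cINF_lower bdd_below_image_Icc continuous_on_subset[OF \<psi>]) auto
  have \<Lambda>: "\<theta> s \<le> \<Lambda> s" "\<Lambda> T = 0" if "s \<in> {0..T}" for s
    using S that unfolding backward_skorokhod_def by auto
  have "min (max (\<theta> T) 0) (INF v\<in>{t..T}. \<psi> v) \<le> \<Lambda> t"
    using t INF_le \<open>\<theta> T \<le> 0\<close> \<Lambda>[of T] by (intro backward_skorokhod_level_ge[OF S, of t T]) force+
  moreover have "(SUP s\<in>{t..T}. min (\<theta> s) (INF v\<in>{t..s}. \<psi> v)) \<le> \<Lambda> t"
  proof (rule cSUP_least)
    fix s assume "s \<in> {t..T}"
    then show "min (\<theta> s) (INF v\<in>{t..s}. \<psi> v) \<le> \<Lambda> t"
      using t INF_le \<Lambda>[of s] by (intro backward_skorokhod_level_ge[OF S, of t s]) force+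
  qed (use t in simp)
  ultimately show ?thesis by simp
qed

lemma backward_skorokhod_until_touch:
  assumes S: "backward_skorokhod \<theta> \<psi> T \<Lambda>" and "0 \<le> t" "t \<le> r" "r \<le> T"
    and above: "\<forall>w\<in>{t..<r}. \<theta> w < \<Lambda> w"
  shows "\<Lambda> t \<le> \<Lambda> r" "\<Lambda> t \<le> (INF v\<in>{t..r}. \<psi> v)"
proof -
  have up: "\<Lambda> t \<le> \<Lambda> v" if "v \<in> {t..r}" for v
    using that assms by (intro backward_skorokhod_increasing_Ico[OF S]) auto
  then show "\<Lambda> t \<le> \<Lambda> r" using \<open>t \<le> r\<close> by simp
  have "\<Lambda> v \<le> \<psi> v" if "v \<in> {t..r}" for v
    using S that assms unfolding backward_skorokhod_def by auto
  then show "\<Lambda> t \<le> (INF v\<in>{t..r}. \<psi> v)"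
    using up \<open>t \<le> r\<close> by (intro cINF_greatest) (simp, meson order.trans)
qed

text \<open>Split at the first time \<open>\<rho> \<ge> t\<close> where \<open>\<Lambda>\<close> touches \<open>\<theta>\<close> (or at \<open>T\<close> if there is none): on \<open>[t, \<rho>]\<close>
  the path does not decrease, so \<open>\<Lambda> t\<close> is below \<open>\<Lambda> \<rho>\<close> and below \<open>\<psi>\<close>.\<close>
lemma backward_skorokhod_le:
  assumes S: "backward_skorokhod \<theta> \<psi> T \<Lambda>" and \<theta>: "continuous_on {0..T} \<theta>"
    and "\<theta> T \<le> 0" and t: "0 \<le> t" "t \<le> T"
  shows "\<Lambda> t \<le> max (min (max (\<theta> T) 0) (INF v\<in>{t..T}. \<psi> v))
                    (SUP s\<in>{t..T}. min (\<theta> s) (INF v\<in>{t..s}. \<psi> v))"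
proof (cases "\<forall>v\<in>{t..<T}. \<theta> v < \<Lambda> v")
  case True
  have "\<Lambda> T = 0" using S unfolding backward_skorokhod_def by blast
  with True have "\<Lambda> t \<le> min (max (\<theta> T) 0) (INF v\<in>{t..T}. \<psi> v)"
    using backward_skorokhod_until_touch[OF S t(1) t(2) order_refl] \<open>\<theta> T \<le> 0\<close> by simp
  then show ?thesis by linarith
next
  case False
  have \<Lambda>: "continuous_on {0..T} \<Lambda>"
    using S unfolding backward_skorokhod_def by blast
  obtain v where "v \<in> {t..<T}" "\<not> \<theta> v < \<Lambda> v" using False by blast
  then have v: "v \<in> {t..T}" "\<Lambda> v - \<theta> v \<le> 0" by auto
  have cont: "continuous_on {t..T} (\<lambda>v. \<Lambda> v - \<theta> v)"
    using \<Lambda>(1) \<theta> t by (intro continuous_intros) (auto elim: continuous_on_subset)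
  obtain \<rho> where \<rho>: "\<rho> \<in> {t..v}" "\<Lambda> \<rho> - \<theta> \<rho> \<le> 0"
    and above: "\<forall>w\<in>{t..<\<rho>}. 0 < \<Lambda> w - \<theta> w"
    by (rule first_hitting_time[OF cont v])
  have "t \<le> \<rho>" "\<rho> \<le> T" "\<forall>w\<in>{t..<\<rho>}. \<theta> w < \<Lambda> w" using \<rho>(1) v(1) above by auto
  from backward_skorokhod_until_touch[OF S t(1) this] \<rho>(2)
  have "\<Lambda> t \<le> min (\<theta> \<rho>) (INF v\<in>{t..\<rho>}. \<psi> v)" by simp
  also have "\<dots> \<le> (SUP s\<in>{t..T}. min (\<theta> s) (INF v\<in>{t..s}. \<psi> v))"
  proof (rule cSUP_upper)
    have "bdd_above (\<theta> ` {t..T})"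
      using t by (intro bdd_above_image_Icc continuous_on_subset[OF \<theta>]) auto
    then obtain B where "\<forall>s\<in>{t..T}. \<theta> s \<le> B" by (auto simp: bdd_above_def)
    then show "bdd_above ((\<lambda>s. min (\<theta> s) (INF v\<in>{t..s}. \<psi> v)) ` {t..T})"
      by (intro bdd_aboveI2[of _ _ B]) (simp add: min.coboundedI1)
  qed (use \<open>t \<le> \<rho>\<close> \<open>\<rho> \<le> T\<close> in auto)
  finally show ?thesis by linarith
qed

theorem backward_skorokhod_formula:
  assumes "backward_skorokhod \<theta> \<psi> T \<Lambda>" "continuous_on {0..T} \<psi>" "continuous_on {0..T} \<theta>"
    and "\<theta> T \<le> 0" "0 \<le> t" "t \<le> T"
  shows "\<Lambda> t = max (min (max (\<theta> T) 0) (INF v\<in>{t..T}. \<psi> v))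
                    (SUP s\<in>{t..T}. min (\<theta> s) (INF v\<in>{t..s}. \<psi> v))"
  using backward_skorokhod_le[OF assms(1,3-6)] backward_skorokhod_ge[OF assms(1,2,4-6)] by linarith

definition skorokhod_decomposition ::
    "real \<Rightarrow> real \<Rightarrow> (real \<Rightarrow> real) \<Rightarrow> (real \<Rightarrow> real) \<Rightarrow> (real \<Rightarrow> real) \<Rightarrow> (real \<Rightarrow> real) \<Rightarrow> (real \<Rightarrow> real) \<Rightarrow> bool" where
  "skorokhod_decomposition p q \<theta> \<psi> \<Lambda> A B \<longleftrightarrow>
    continuous_on {p..q} \<Lambda> \<and> continuous_on {p..q} A \<and> continuous_on {p..q} B \<and>
    mono_on {p..q} A \<and> mono_on {p..q} B \<and>
    (\<forall>v\<in>{p..q}. \<theta> v \<le> \<Lambda> v \<and> \<Lambda> v \<le> \<psi> v) \<and> (\<forall>v\<in>{p..q}. \<Lambda> v = A v - B v) \<and>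
    (\<forall>x y. p \<le> x \<and> x \<le> y \<and> y \<le> q \<and> A x < A y \<longrightarrow> (\<exists>w\<in>{x..y}. \<Lambda> w = \<psi> w)) \<and>
    (\<forall>x y. p \<le> x \<and> x \<le> y \<and> y \<le> q \<and> B x < B y \<longrightarrow> (\<exists>w\<in>{x..y}. \<Lambda> w = \<theta> w))"

lemma skorokhod_decomposition_flip:
  assumes "skorokhod_decomposition p q \<theta> \<psi> \<Lambda> A B"
  shows "skorokhod_decomposition p q (\<lambda>v. - \<psi> v) (\<lambda>v. - \<theta> v) (\<lambda>v. - \<Lambda> v) B A"
proof -
  have flip: "(\<exists>w\<in>{x..y}. - \<Lambda> w = - \<phi> w) \<longleftrightarrow> (\<exists>w\<in>{x..y}. \<Lambda> w = \<phi> w)"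
    for x y :: real and \<phi> :: "real \<Rightarrow> real"
    by simp
  show ?thesis
    using assms unfolding skorokhod_decomposition_def flip by (auto intro: continuous_intros)
qed

lemma continuous_on_glue:
  fixes f g :: "real \<Rightarrow> real"
  assumes "continuous_on {p..q} f" "continuous_on {q..T} g" "f q = g q" "p \<le> q" "q \<le> T"
  shows "continuous_on {p..T} (\<lambda>v. if v \<le> q then f v else g v)"
proof (rule continuous_on_cases_le[where h = "\<lambda>v. v"])
  show "continuous_on {v \<in> {p..T}. v \<le> q} f" "continuous_on {v \<in> {p..T}. q \<le> v} g"
    using assms by (auto elim!: continuous_on_subset)
qed (use assms in \<open>auto intro: continuous_intros\<close>)

lemma mono_on_glue:
  fixes f g :: "real \<Rightarrow> real"
  assumes "mono_on {p..q} f" "mono_on {q..T} g" "f q \<le> g q" "p \<le> q"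
  shows "mono_on {p..T} (\<lambda>v. if v \<le> q then f v else g v)"
proof (rule mono_onI)
  fix x y assume "x \<in> {p..T}" "y \<in> {p..T}" "x \<le> y"
  moreover have "f x \<le> f q" if "x \<in> {p..q}" using that assms by (intro mono_onD[OF assms(1)]) auto
  moreover have "g q \<le> g y" if "y \<in> {q..T}" using that assms by (intro mono_onD[OF assms(2)]) auto
  ultimately show "(if x \<le> q then f x else g x) \<le> (if y \<le> q then f y else g y)"
    using assms by (auto intro: mono_onD)
qed

text \<open>If \<open>x \<le> q < y\<close>, the glued function increases on \<open>[x, y]\<close> only if one of its pieces
  increases on \<open>[x, q]\<close> or on \<open>[q, y]\<close>.\<close>
lemma glue_increase_touches:
  fixes A1 A2 \<Lambda>1 \<Lambda>2 \<phi> :: "real \<Rightarrow> real"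
  assumes A1: "\<forall>x y. p \<le> x \<and> x \<le> y \<and> y \<le> q \<and> A1 x < A1 y \<longrightarrow> (\<exists>w\<in>{x..y}. \<Lambda>1 w = \<phi> w)"
    and A2: "\<forall>x y. q \<le> x \<and> x \<le> y \<and> y \<le> T \<and> A2 x < A2 y \<longrightarrow> (\<exists>w\<in>{x..y}. \<Lambda>2 w = \<phi> w)"
    and "\<Lambda>1 q = \<Lambda>2 q"
    and xy: "p \<le> x" "x \<le> y" "y \<le> T"
    and less: "(if x \<le> q then A1 x - A1 q + A2 q else A2 x) < (if y \<le> q then A1 y - A1 q + A2 q else A2 y)"
  shows "\<exists>w\<in>{x..y}. (if w \<le> q then \<Lambda>1 w else \<Lambda>2 w) = \<phi> w"
proof -
  consider "y \<le> q" | "q < x" | "x \<le> q" "q < y" "A1 x < A1 q" | "x \<le> q" "q < y" "A2 q < A2 y"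
  proof (cases "y \<le> q")
    case False
    show thesis
    proof (cases "x \<le> q")
      case True
      moreover have "A1 x < A1 q \<or> A2 q < A2 y"
        using less True False by auto
      ultimately show thesis using that(3,4) False by force
    qed (use that(2) in simp)
  qed (use that(1) in blast)
  then show ?thesis
  proof cases
    case 1
    then obtain w where "w \<in> {x..y}" "\<Lambda>1 w = \<phi> w" using A1[rule_format, of x y] xy less by auto
    then show ?thesis using 1 by auto
  next
    case 2
    then obtain w where "w \<in> {x..y}" "\<Lambda>2 w = \<phi> w" using A2[rule_format, of x y] xy less by auto
    then show ?thesis using 2 by auto
  next
    case 3
    then obtain w where "w \<in> {x..q}" "\<Lambda>1 w = \<phi> w" using A1[rule_format, of x q] xy by auto
    then show ?thesis using 3 by (intro bexI[of _ w]) auto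
  next
    case 4
    then obtain w where w: "w \<in> {q..y}" "\<Lambda>2 w = \<phi> w" using A2[rule_format, of q y] xy by auto
    then show ?thesis
      using 4 \<open>\<Lambda>1 q = \<Lambda>2 q\<close> by (intro bexI[of _ w]) auto
  qed
qed

lemma skorokhod_decomposition_glue:
  assumes S1: "skorokhod_decomposition p q \<theta> \<psi> \<Lambda>1 A1 B1"
    and S2: "skorokhod_decomposition q T \<theta> \<psi> \<Lambda>2 A2 B2"
    and "p \<le> q" "q \<le> T" "\<Lambda>1 q = \<Lambda>2 q"
  shows "skorokhod_decomposition p T \<theta> \<psi> (\<lambda>v. if v \<le> q then \<Lambda>1 v else \<Lambda>2 v)
           (\<lambda>v. if v \<le> q then A1 v - A1 q + A2 q else A2 v) (\<lambda>v. if v \<le> q then B1 v - B1 q + B2 q else B2 v)"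
proof -
  have cont1: "continuous_on {p..q} \<Lambda>1" "continuous_on {p..q} A1" "continuous_on {p..q} B1"
    and mono1: "mono_on {p..q} A1" "mono_on {p..q} B1"
    and bnd1: "\<forall>v\<in>{p..q}. \<theta> v \<le> \<Lambda>1 v \<and> \<Lambda>1 v \<le> \<psi> v" and eq1: "\<forall>v\<in>{p..q}. \<Lambda>1 v = A1 v - B1 v"
    and flat1: "\<forall>x y. p \<le> x \<and> x \<le> y \<and> y \<le> q \<and> A1 x < A1 y \<longrightarrow> (\<exists>w\<in>{x..y}. \<Lambda>1 w = \<psi> w)"
      "\<forall>x y. p \<le> x \<and> x \<le> y \<and> y \<le> q \<and> B1 x < B1 y \<longrightarrow> (\<exists>w\<in>{x..y}. \<Lambda>1 w = \<theta> w)"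
    using S1 unfolding skorokhod_decomposition_def by blast+
  have cont2: "continuous_on {q..T} \<Lambda>2" "continuous_on {q..T} A2" "continuous_on {q..T} B2"
    and mono2: "mono_on {q..T} A2" "mono_on {q..T} B2"
    and bnd2: "\<forall>v\<in>{q..T}. \<theta> v \<le> \<Lambda>2 v \<and> \<Lambda>2 v \<le> \<psi> v" and eq2: "\<forall>v\<in>{q..T}. \<Lambda>2 v = A2 v - B2 v"
    and flat2: "\<forall>x y. q \<le> x \<and> x \<le> y \<and> y \<le> T \<and> A2 x < A2 y \<longrightarrow> (\<exists>w\<in>{x..y}. \<Lambda>2 w = \<psi> w)"
      "\<forall>x y. q \<le> x \<and> x \<le> y \<and> y \<le> T \<and> B2 x < B2 y \<longrightarrow> (\<exists>w\<in>{x..y}. \<Lambda>2 w = \<theta> w)"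
    using S2 unfolding skorokhod_decomposition_def by blast+
  have q: "q \<in> {p..q}" "q \<in> {q..T}" using assms by auto
  show ?thesis
    unfolding skorokhod_decomposition_def
  proof (intro conjI allI impI)
    show "continuous_on {p..T} (\<lambda>v. if v \<le> q then \<Lambda>1 v else \<Lambda>2 v)"
      "continuous_on {p..T} (\<lambda>v. if v \<le> q then A1 v - A1 q + A2 q else A2 v)"
      "continuous_on {p..T} (\<lambda>v. if v \<le> q then B1 v - B1 q + B2 q else B2 v)"
      using cont1 cont2 assms(3-5) by (auto intro!: continuous_on_glue continuous_intros)
    show "mono_on {p..T} (\<lambda>v. if v \<le> q then A1 v - A1 q + A2 q else A2 v)"
      "mono_on {p..T} (\<lambda>v. if v \<le> q then B1 v - B1 q + B2 q else B2 v)"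
      using mono1 mono2 assms(3) by (intro mono_on_glue; simp add: mono_on_def)+
    show "\<forall>v\<in>{p..T}. \<theta> v \<le> (if v \<le> q then \<Lambda>1 v else \<Lambda>2 v) \<and> (if v \<le> q then \<Lambda>1 v else \<Lambda>2 v) \<le> \<psi> v"
      using bnd1 bnd2 by auto
    show "\<forall>v\<in>{p..T}. (if v \<le> q then \<Lambda>1 v else \<Lambda>2 v)
      = (if v \<le> q then A1 v - A1 q + A2 q else A2 v) - (if v \<le> q then B1 v - B1 q + B2 q else B2 v)"
      using eq1 eq2 q \<open>\<Lambda>1 q = \<Lambda>2 q\<close> by auto
  qed (use glue_increase_touches[OF flat1(1) flat2(1) \<open>\<Lambda>1 q = \<Lambda>2 q\<close>]
        glue_increase_touches[OF flat1(2) flat2(2) \<open>\<Lambda>1 q = \<Lambda>2 q\<close>] in blast)+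
qed

lemma running_Sup_attained:
  fixes h :: "real \<Rightarrow> real"
  assumes "continuous_on {p..q} h" "v \<in> {p..q}"
  obtains w where "w \<in> {v..q}" "Sup (h ` {v..q}) = h w" "\<forall>w'\<in>{v..q}. h w' \<le> h w"
proof -
  have "continuous_on {v..q} h" using assms by (intro continuous_on_subset[OF assms(1)]) auto
  then obtain w where w: "w \<in> {v..q}" "\<forall>w'\<in>{v..q}. h w' \<le> h w"
    using continuous_attains_sup[of "{v..q}" h] assms(2) by auto
  then have "Sup (h ` {v..q}) = h w" by (intro cSup_eq_maximum) auto
  with w that show ?thesis by blast
qed


lemma running_Sup_upper:
  fixes h :: "real \<Rightarrow> real"
  assumes "continuous_on {p..q} h" "p \<le> v" "w \<in> {v..q}"
  shows "h w \<le> Sup (h ` {v..q})"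
  using assms by (intro cSup_upper bdd_above_image_Icc) (auto elim: continuous_on_subset)


lemma running_Sup_antimono:
  fixes h :: "real \<Rightarrow> real"
  assumes "continuous_on {p..q} h" "p \<le> x" "x \<le> y" "y \<le> q"
  shows "Sup (h ` {y..q}) \<le> Sup (h ` {x..q})"
  using assms by (intro cSup_subset_mono bdd_above_image_Icc) (auto elim: continuous_on_subset)


lemma continuous_on_running_Sup:
  fixes h :: "real \<Rightarrow> real"
  assumes h: "continuous_on {p..q} h"
  shows "continuous_on {p..q} (\<lambda>v. Sup (h ` {v..q}))"
proof (rule uniformly_continuous_imp_continuous)
  let ?S = "\<lambda>v. Sup (h ` {v..q})"
  show "uniformly_continuous_on {p..q} ?S"
    unfolding uniformly_continuous_on_def
  proof (intro allI impI)
    fix e :: real assume "0 < e"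
    then obtain d where "0 < d" and d: "\<forall>x\<in>{p..q}. \<forall>x'\<in>{p..q}. dist x' x < d \<longrightarrow> dist (h x') (h x) < e"
      using compact_uniformly_continuous[OF h compact_Icc] unfolding uniformly_continuous_on_def by meson
    have close: "\<bar>?S x - ?S y\<bar> < e" if xy: "x \<in> {p..q}" "y \<in> {p..q}" "x \<le> y" "y - x < d" for x y
    proof -
      obtain w where w: "w \<in> {x..q}" "?S x = h w"
        using running_Sup_attained[OF h xy(1)] by blast
      have "h w < ?S y + e"
      proof (cases "y \<le> w")
        case True
        then show ?thesis using running_Sup_upper[OF h, of y w] xy w \<open>0 < e\<close> by auto
      next
        case False
        then have "dist (h w) (h y) < e" using d xy w by (auto simp: dist_real_def)
        moreover have "h y \<le> ?S y" using running_Sup_upper[OF h, of y y] xy by auto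
        ultimately show ?thesis by (simp add: dist_real_def)
      qed
      moreover have "?S y \<le> ?S x" using running_Sup_antimono[OF h, of x y] xy by auto
      ultimately show ?thesis using w by simp
    qed
    show "\<exists>d>0. \<forall>x\<in>{p..q}. \<forall>x'\<in>{p..q}. dist x' x < d \<longrightarrow> dist (?S x') (?S x) < e"
    proof (intro exI[of _ d] conjI ballI impI)
      fix x x' assume "x \<in> {p..q}" "x' \<in> {p..q}" "dist x' x < d"
      then show "dist (?S x') (?S x) < e"
        using close[of x x'] close[of x' x] by (cases "x \<le> x'") (auto simp: dist_real_def abs_minus_commute)
    qed (rule \<open>0 < d\<close>)
  qed
qed


text \<open>A strict drop of the running supremum between \<open>x\<close> and \<open>y\<close> is caused by the maximiser over \<open>[x, q]\<close>,
  which must then lie in \<open>[x, y]\<close>.\<close>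
lemma running_Sup_decrease_touches:
  fixes h :: "real \<Rightarrow> real"
  assumes h: "continuous_on {p..q} h" and "p \<le> x" "x \<le> y" "y \<le> q"
    and less: "Sup (h ` {y..q}) < Sup (h ` {x..q})"
  obtains w where "w \<in> {x..y}" "Sup (h ` {w..q}) = h w" "h w = Sup (h ` {x..q})"
proof -
  obtain w where w: "w \<in> {x..q}" "Sup (h ` {x..q}) = h w"
    using running_Sup_attained[OF h, of x] assms by auto
  have "w \<le> y"
  proof (rule ccontr)
    assume "\<not> w \<le> y"
    then have "h w \<le> Sup (h ` {y..q})" using running_Sup_upper[OF h, of y w] assms w by auto
    then show False using less w by simp
  qed
  moreover have "Sup (h ` {w..q}) \<le> Sup (h ` {x..q})" "h w \<le> Sup (h ` {w..q})"
    using running_Sup_antimono[OF h, of x w] running_Sup_upper[OF h, of w w] assms w by auto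
  ultimately show ?thesis using that w by force
qed


lemma skorokhod_decomposition_push_up:
  assumes \<theta>: "continuous_on {p..q} \<theta>" and "p \<le> q" "\<theta> q \<le> l"
    and l_le: "\<forall>v\<in>{p..q}. l \<le> \<psi> v" and \<theta>_le: "\<forall>v\<in>{p..q}. \<forall>w\<in>{p..q}. \<theta> w \<le> \<psi> v"
  shows "skorokhod_decomposition p q \<theta> \<psi> (\<lambda>v. max l (Sup (\<theta> ` {v..q}))) (\<lambda>_. 0)
           (\<lambda>v. - max l (Sup (\<theta> ` {v..q})))"
proof -
  let ?S = "\<lambda>v. Sup (\<theta> ` {v..q})"
  have S_cont: "continuous_on {p..q} ?S" by (rule continuous_on_running_Sup[OF \<theta>])
  have bounds: "\<theta> v \<le> max l (?S v) \<and> max l (?S v) \<le> \<psi> v" if v: "v \<in> {p..q}" for v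
  proof -
    obtain w where "w \<in> {v..q}" "?S v = \<theta> w"
      using running_Sup_attained[OF \<theta> v] by blast
    then show ?thesis
      using running_Sup_upper[OF \<theta>, of v v] l_le \<theta>_le v by fastforce
  qed
  have B_mono: "mono_on {p..q} (\<lambda>v. - max l (?S v))"
  proof (rule mono_onI)
    fix r s assume "r \<in> {p..q}" "s \<in> {p..q}" "r \<le> s"
    then have "?S s \<le> ?S r" using running_Sup_antimono[OF \<theta>, of r s] by auto
    from max.mono[OF order_refl this] show "- max l (?S r) \<le> - max l (?S s)" by simp
  qed
  have B_flat: "\<exists>w\<in>{x..y}. max l (?S w) = \<theta> w"
    if xy: "p \<le> x" "x \<le> y" "y \<le> q" "- max l (?S x) < - max l (?S y)" for x y
  proof -
    have "?S y < ?S x" "l < ?S x" using xy(4) by (auto simp: max_def split: if_splits)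
    then obtain w where "w \<in> {x..y}" "?S w = \<theta> w" "\<theta> w = ?S x"
      using running_Sup_decrease_touches[OF \<theta> xy(1-3)] by blast
    then show ?thesis using \<open>l < ?S x\<close> by (intro bexI[of _ w]) auto
  qed
  have \<Lambda>_cont: "continuous_on {p..q} (\<lambda>v. max l (?S v))"
    using S_cont by (intro continuous_on_max continuous_on_const)
  show ?thesis
    unfolding skorokhod_decomposition_def
    using \<Lambda>_cont continuous_on_minus[OF \<Lambda>_cont] bounds B_mono B_flat
    by (auto simp: mono_on_def)
qed


lemma skorokhod_decomposition_push_down:
  assumes \<psi>: "continuous_on {p..q} \<psi>" and "p \<le> q" "l \<le> \<psi> q"
    and le_l: "\<forall>v\<in>{p..q}. \<theta> v \<le> l" and \<theta>_le: "\<forall>v\<in>{p..q}. \<forall>w\<in>{p..q}. \<theta> v \<le> \<psi> w"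
  shows "\<exists>\<Lambda> A B. skorokhod_decomposition p q \<theta> \<psi> \<Lambda> A B \<and> \<Lambda> q = l"
proof -
  have "skorokhod_decomposition p q (\<lambda>v. - \<psi> v) (\<lambda>v. - \<theta> v)
      (\<lambda>v. max (- l) (Sup ((\<lambda>v. - \<psi> v) ` {v..q}))) (\<lambda>_. 0)
      (\<lambda>v. - max (- l) (Sup ((\<lambda>v. - \<psi> v) ` {v..q})))"
    using assms by (intro skorokhod_decomposition_push_up continuous_on_minus) auto
  from skorokhod_decomposition_flip[OF this]
  have "skorokhod_decomposition p q \<theta> \<psi> (\<lambda>v. - max (- l) (Sup ((\<lambda>v. - \<psi> v) ` {v..q})))
      (\<lambda>v. - max (- l) (Sup ((\<lambda>v. - \<psi> v) ` {v..q}))) (\<lambda>_. 0)"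
    by simp
  moreover have "- max (- l) (Sup ((\<lambda>v. - \<psi> v) ` {q..q})) = l" using \<open>l \<le> \<psi> q\<close> by simp
  ultimately show ?thesis by blast
qed

text \<open>If the barriers oscillate by less than a third of their gap, a start value \<open>l\<close> at \<open>q\<close> is far from
  one of them on the whole cell: push up from \<open>\<theta>\<close> or down from \<open>\<psi>\<close>.\<close>
lemma skorokhod_decomposition_cell:
  assumes "p \<le> q" and \<theta>: "continuous_on {p..q} \<theta>" and \<psi>: "continuous_on {p..q} \<psi>"
    and "\<theta> q \<le> l" "l \<le> \<psi> q"
    and osc: "\<forall>v\<in>{p..q}. \<forall>w\<in>{p..q}. \<bar>\<theta> v - \<theta> w\<bar> < g / 3 \<and> \<bar>\<psi> v - \<psi> w\<bar> < g / 3"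
    and gap: "\<forall>v\<in>{p..q}. \<theta> v + g \<le> \<psi> v"
  shows "\<exists>\<Lambda> A B. skorokhod_decomposition p q \<theta> \<psi> \<Lambda> A B \<and> \<Lambda> q = l"
proof -
  have q: "q \<in> {p..q}" using \<open>p \<le> q\<close> by simp
  have \<theta>_le: "\<forall>v\<in>{p..q}. \<forall>w\<in>{p..q}. \<theta> w \<le> \<psi> v"
  proof (intro ballI)
    fix v w assume "v \<in> {p..q}" "w \<in> {p..q}"
    then have "\<bar>\<psi> v - \<psi> w\<bar> < g / 3" "\<theta> w + g \<le> \<psi> w" using osc gap by blast+
    then show "\<theta> w \<le> \<psi> v" by linarith
  qed
  show ?thesis
  proof (cases "l \<le> \<theta> q + g / 3")
    case True
    have "\<forall>v\<in>{p..q}. l \<le> \<psi> v"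
    proof
      fix v assume "v \<in> {p..q}"
      then have "\<bar>\<psi> v - \<psi> q\<bar> < g / 3" "\<theta> q + g \<le> \<psi> q" using osc gap q by blast+
      then show "l \<le> \<psi> v" using True by linarith
    qed
    with \<theta>_le have "skorokhod_decomposition p q \<theta> \<psi> (\<lambda>v. max l (Sup (\<theta> ` {v..q}))) (\<lambda>_. 0)
        (\<lambda>v. - max l (Sup (\<theta> ` {v..q})))"
      by (intro skorokhod_decomposition_push_up[OF \<theta> \<open>p \<le> q\<close> \<open>\<theta> q \<le> l\<close>])
    moreover have "max l (Sup (\<theta> ` {q..q})) = l" using \<open>\<theta> q \<le> l\<close> by simp
    ultimately show ?thesis by blast
  next
    case False
    have "\<forall>v\<in>{p..q}. \<theta> v \<le> l"
    proof
      fix v assume "v \<in> {p..q}"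
      then have "\<bar>\<theta> v - \<theta> q\<bar> < g / 3" using osc q by blast
      then show "\<theta> v \<le> l" using False by linarith
    qed
    with \<theta>_le show ?thesis
      by (intro skorokhod_decomposition_push_down[OF \<psi> \<open>p \<le> q\<close> \<open>l \<le> \<psi> q\<close>]) auto
  qed
qed

lemma skorokhod_decomposition_extend:
  assumes S: "skorokhod_decomposition q T \<theta> \<psi> \<Lambda> A B" and "p \<le> q" "q \<le> T"
    and \<theta>: "continuous_on {p..q} \<theta>" and \<psi>: "continuous_on {p..q} \<psi>"
    and osc: "\<forall>v\<in>{p..q}. \<forall>w\<in>{p..q}. \<bar>\<theta> v - \<theta> w\<bar> < g / 3 \<and> \<bar>\<psi> v - \<psi> w\<bar> < g / 3"
    and gap: "\<forall>v\<in>{p..q}. \<theta> v + g \<le> \<psi> v"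
  shows "\<exists>\<Lambda>' A' B'. skorokhod_decomposition p T \<theta> \<psi> \<Lambda>' A' B' \<and> \<Lambda>' T = \<Lambda> T"
proof -
  have "q \<in> {q..T}" using \<open>q \<le> T\<close> by simp
  then have "\<theta> q \<le> \<Lambda> q" "\<Lambda> q \<le> \<psi> q"
    using S unfolding skorokhod_decomposition_def by auto
  then obtain \<Lambda>1 A1 B1 where S1: "skorokhod_decomposition p q \<theta> \<psi> \<Lambda>1 A1 B1" and "\<Lambda>1 q = \<Lambda> q"
    using skorokhod_decomposition_cell[OF \<open>p \<le> q\<close> \<theta> \<psi> _ _ osc gap] by blast
  let ?\<Lambda> = "\<lambda>v. if v \<le> q then \<Lambda>1 v else \<Lambda> v"
  have "skorokhod_decomposition p T \<theta> \<psi> ?\<Lambda> (\<lambda>v. if v \<le> q then A1 v - A1 q + A q else A v)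
      (\<lambda>v. if v \<le> q then B1 v - B1 q + B q else B v)"
    by (rule skorokhod_decomposition_glue[OF S1 S \<open>p \<le> q\<close> \<open>q \<le> T\<close> \<open>\<Lambda>1 q = \<Lambda> q\<close>])
  moreover have "?\<Lambda> T = \<Lambda> T"
    using \<open>\<Lambda>1 q = \<Lambda> q\<close> \<open>q \<le> T\<close> by (cases "q = T") auto
  ultimately show ?thesis by (intro exI[of _ ?\<Lambda>] exI conjI)
qed

text \<open>Backward induction over cells of length \<open>\<delta> / 2\<close>, where \<open>\<delta>\<close> is a common modulus of uniform
  continuity of both barriers for the oscillation \<open>g / 3\<close>.\<close>
theorem skorokhod_decomposition_exists:
  assumes "0 \<le> T" and \<theta>: "continuous_on {0..T} \<theta>" and \<psi>: "continuous_on {0..T} \<psi>"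
    and "0 < g" and gap: "\<forall>v\<in>{0..T}. \<theta> v + g \<le> \<psi> v" and "\<theta> T \<le> 0" "0 \<le> \<psi> T"
  shows "\<exists>\<Lambda> A B. skorokhod_decomposition 0 T \<theta> \<psi> \<Lambda> A B \<and> \<Lambda> T = 0"
proof -
  have "0 < g / 3" using \<open>0 < g\<close> by simp
  obtain \<delta>1 where "0 < \<delta>1" and \<delta>1: "\<forall>x\<in>{0..T}. \<forall>x'\<in>{0..T}. dist x' x < \<delta>1 \<longrightarrow> dist (\<theta> x') (\<theta> x) < g / 3"
    using compact_uniformly_continuous[OF \<theta> compact_Icc] \<open>0 < g / 3\<close>
    unfolding uniformly_continuous_on_def by meson
  obtain \<delta>2 where "0 < \<delta>2" and \<delta>2: "\<forall>x\<in>{0..T}. \<forall>x'\<in>{0..T}. dist x' x < \<delta>2 \<longrightarrow> dist (\<psi> x') (\<psi> x) < g / 3"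
    using compact_uniformly_continuous[OF \<psi> compact_Icc] \<open>0 < g / 3\<close>
    unfolding uniformly_continuous_on_def by meson
  define \<delta> where "\<delta> = min \<delta>1 \<delta>2"
  have "0 < \<delta>" using \<open>0 < \<delta>1\<close> \<open>0 < \<delta>2\<close> by (simp add: \<delta>_def)
  define P where "P n = max 0 (T - real n * (\<delta> / 2))" for n :: nat
  have ex: "\<exists>\<Lambda> A B. skorokhod_decomposition (P n) T \<theta> \<psi> \<Lambda> A B \<and> \<Lambda> T = 0" for n
  proof (induction n)
    case 0
    have "skorokhod_decomposition T T \<theta> \<psi> (\<lambda>_. 0) (\<lambda>_. 0) (\<lambda>_. 0)"
      using \<open>\<theta> T \<le> 0\<close> \<open>0 \<le> \<psi> T\<close> unfolding skorokhod_decomposition_def by (auto simp: mono_on_def)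
    moreover have "P 0 = T" using \<open>0 \<le> T\<close> by (simp add: P_def)
    ultimately show ?case by auto
  next
    case (Suc n)
    then obtain \<Lambda> A B where S: "skorokhod_decomposition (P n) T \<theta> \<psi> \<Lambda> A B" and "\<Lambda> T = 0"
      by blast
    let ?p = "P (Suc n)" and ?q = "P n"
    have "T - real (Suc n) * (\<delta> / 2) \<le> T - real n * (\<delta> / 2)" using \<open>0 < \<delta>\<close> by simp
    then have "?p \<le> ?q" unfolding P_def by (rule max.mono[OF order_refl])
    have "?q \<le> T" using \<open>0 \<le> T\<close> \<open>0 < \<delta>\<close> by (simp add: P_def)
    have "?q - ?p < \<delta>" using \<open>0 < \<delta>\<close> by (simp add: P_def max_def algebra_simps)
    have sub: "{?p..?q} \<subseteq> {0..T}" using \<open>?q \<le> T\<close> by (auto simp: P_def)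
    have "\<forall>v\<in>{?p..?q}. \<forall>w\<in>{?p..?q}. \<bar>\<theta> v - \<theta> w\<bar> < g / 3 \<and> \<bar>\<psi> v - \<psi> w\<bar> < g / 3"
    proof (intro ballI)
      fix v w assume "v \<in> {?p..?q}" "w \<in> {?p..?q}"
      moreover from this have "dist v w < \<delta>1" "dist v w < \<delta>2"
        using \<open>?q - ?p < \<delta>\<close> by (auto simp: \<delta>_def dist_real_def)
      ultimately show "\<bar>\<theta> v - \<theta> w\<bar> < g / 3 \<and> \<bar>\<psi> v - \<psi> w\<bar> < g / 3"
        using \<delta>1 \<delta>2 sub by (auto simp: dist_real_def)
    qed
    moreover have "\<forall>v\<in>{?p..?q}. \<theta> v + g \<le> \<psi> v" using gap sub by blast
    ultimately show ?case
      using skorokhod_decomposition_extend[OF S \<open>?p \<le> ?q\<close> \<open>?q \<le> T\<close>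
          continuous_on_subset[OF \<theta> sub] continuous_on_subset[OF \<psi> sub]] \<open>\<Lambda> T = 0\<close>
      by metis
  qed
  obtain n :: nat where "T / (\<delta> / 2) < n" using reals_Archimedean2 by blast
  then have "P n = 0" using \<open>0 < \<delta>\<close> by (simp add: P_def field_simps)
  then show ?thesis using ex[of n] by simp
qed

lemma skorokhod_decomposition_CTB:
  assumes "skorokhod_decomposition 0 T \<theta> \<psi> \<Lambda> A B"
  shows "CTB T (\<lambda>v. \<Lambda> v - \<Lambda> 0)"
proof -
  have "continuous_on {0..T} \<Lambda>" "mono_on {0..T} A" "mono_on {0..T} B" "\<forall>v\<in>{0..T}. \<Lambda> v = A v - B v"
    using assms unfolding skorokhod_decomposition_def by blast+
  have "\<forall>v\<in>{0..T}. \<Lambda> v - \<Lambda> 0 = (A v - B v) + (- \<Lambda> 0)"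
    using \<open>\<forall>v\<in>{0..T}. \<Lambda> v = A v - B v\<close> by auto
  moreover have "bounded_variation_on (\<lambda>v. A v - B v) 0 T"
    using \<open>mono_on {0..T} A\<close> \<open>mono_on {0..T} B\<close>
    by (intro bounded_variation_on_diff bounded_variation_on_mono)
  ultimately have "bounded_variation_on (\<lambda>v. \<Lambda> v - \<Lambda> 0) 0 T"
    by (rule bounded_variation_on_cong)
  then show ?thesis
    using \<open>continuous_on {0..T} \<Lambda>\<close> unfolding CTB_def by (auto intro: continuous_intros)
qed

lemma skorokhod_decomposition_rs_integral_upper:
  assumes S: "skorokhod_decomposition 0 T \<theta> \<psi> \<Lambda> A B"
    and f: "continuous_on {0..T} f" "\<forall>v\<in>{0..T}. 0 \<le> f v" "\<forall>v\<in>{0..T}. \<Lambda> v = \<psi> v \<longrightarrow> f v = 0"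
    and st: "0 \<le> s" "s \<le> t" "t \<le> T"
  shows "\<exists>I. has_rs_integral f (\<lambda>v. \<Lambda> v - \<Lambda> 0) s t I \<and> I \<le> 0"
proof -
  have sub: "{s..t} \<subseteq> {0..T}" using st by auto
  have "continuous_on {0..T} A" "mono_on {0..T} A" "continuous_on {0..T} B" "mono_on {0..T} B"
    and \<Lambda>: "\<forall>v\<in>{0..T}. \<Lambda> v = A v - B v"
    and flat: "\<forall>x y. 0 \<le> x \<and> x \<le> y \<and> y \<le> T \<and> A x < A y \<longrightarrow> (\<exists>w\<in>{x..y}. \<Lambda> w = \<psi> w)"
    using S unfolding skorokhod_decomposition_def by blast+
  moreover have "\<forall>x y. s \<le> x \<and> x \<le> y \<and> y \<le> t \<and> A x < A y \<longrightarrow> (\<exists>w\<in>{x..y}. f w = 0)"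
  proof (intro allI impI)
    fix x y assume xy: "s \<le> x \<and> x \<le> y \<and> y \<le> t \<and> A x < A y"
    then have "0 \<le> x \<and> x \<le> y \<and> y \<le> T \<and> A x < A y" using st by auto
    then obtain w where "w \<in> {x..y}" "\<Lambda> w = \<psi> w" using flat by blast
    then show "\<exists>w\<in>{x..y}. f w = 0" using f(3) xy st by (intro bexI[of _ w]) auto
  qed
  moreover have "\<forall>v\<in>{s..t}. \<Lambda> v - \<Lambda> 0 = A v - B v + (- \<Lambda> 0)" using \<Lambda> sub by auto
  ultimately show ?thesis
    using sub f(1,2)
    by (intro rs_integral_nonpos_of_decomposition[OF \<open>s \<le> t\<close> continuous_on_subset[OF f(1) sub]
        _ continuous_on_subset[of "{0..T}" A] mono_on_subset[of "{0..T}" A]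
        continuous_on_subset[of "{0..T}" B] mono_on_subset[of "{0..T}" B]]) auto
qed

lemma skorokhod_decomposition_rs_integral_lower:
  assumes S: "skorokhod_decomposition 0 T \<theta> \<psi> \<Lambda> A B"
    and g: "continuous_on {0..T} g" "\<forall>v\<in>{0..T}. g v \<le> 0" "\<forall>v\<in>{0..T}. \<Lambda> v = \<theta> v \<longrightarrow> g v = 0"
    and st: "0 \<le> s" "s \<le> t" "t \<le> T"
  shows "\<exists>I. has_rs_integral g (\<lambda>v. \<Lambda> v - \<Lambda> 0) s t I \<and> I \<le> 0"
proof -
  have "\<exists>I. has_rs_integral (\<lambda>v. - g v) (\<lambda>v. - \<Lambda> v - - \<Lambda> 0) s t I \<and> I \<le> 0"
    by (rule skorokhod_decomposition_rs_integral_upper[OF skorokhod_decomposition_flip[OF S]])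
      (use g st in \<open>auto intro: continuous_intros\<close>)
  then obtain I where I: "has_rs_integral (\<lambda>v. - g v) (\<lambda>v. - \<Lambda> v - - \<Lambda> 0) s t I" "I \<le> 0"
    by blast
  have "has_rs_integral (\<lambda>v. - (- g v)) (\<lambda>v. - (- \<Lambda> v - - \<Lambda> 0)) s t (- (- I))"
    using has_rs_integral_uminus_integrator[OF has_rs_integral_uminus[OF I(1)]] .
  then show ?thesis using I(2) by auto
qed

section \<open>Sublinear expectations\<close>

locale sublinear_expectation_space =
  fixes H :: "('w \<Rightarrow> real) set" and E :: "('w \<Rightarrow> real) \<Rightarrow> real"
  assumes sublinear: "sublinear_expectation H E"
begin

lemma const_in [simp, intro]: "(\<lambda>_. c) \<in> H"
  using sublinear unfolding sublinear_expectation_def by blast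

lemma add_in [intro]: "X \<in> H \<Longrightarrow> Y \<in> H \<Longrightarrow> (\<lambda>w. X w + Y w) \<in> H"
  using sublinear unfolding sublinear_expectation_def by blast

lemma scale_in [intro]: "X \<in> H \<Longrightarrow> (\<lambda>w. a * X w) \<in> H"
  using sublinear unfolding sublinear_expectation_def by blast

lemma abs_in [intro]: "X \<in> H \<Longrightarrow> (\<lambda>w. \<bar>X w\<bar>) \<in> H"
  using sublinear unfolding sublinear_expectation_def by blast

lemma add_const_in [intro]: "X \<in> H \<Longrightarrow> (\<lambda>w. X w + c) \<in> H"
  using add_in[of X "\<lambda>_. c"] by simp

lemma diff_in [intro]: "X \<in> H \<Longrightarrow> Y \<in> H \<Longrightarrow> (\<lambda>w. X w - Y w) \<in> H"
  using add_in[of X "\<lambda>w. (- 1) * Y w"] scale_in[of Y "- 1"] by simp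

lemma E_mono: "X \<in> H \<Longrightarrow> Y \<in> H \<Longrightarrow> (\<And>w. X w \<le> Y w) \<Longrightarrow> E X \<le> E Y"
  using sublinear unfolding sublinear_expectation_def by blast

lemma E_const [simp]: "E (\<lambda>_. c) = c"
  using sublinear unfolding sublinear_expectation_def by blast

lemma E_add_le: "X \<in> H \<Longrightarrow> Y \<in> H \<Longrightarrow> E (\<lambda>w. X w + Y w) \<le> E X + E Y"
  using sublinear unfolding sublinear_expectation_def by blast

lemma E_scale: "X \<in> H \<Longrightarrow> 0 \<le> a \<Longrightarrow> E (\<lambda>w. a * X w) = a * E X"
  using sublinear unfolding sublinear_expectation_def by blast

text \<open>Subadditivity, applied to \<open>X + c\<close> and to \<open>(X + c) + (- c)\<close>.\<close>
lemma E_add_const: "X \<in> H \<Longrightarrow> E (\<lambda>w. X w + c) = E X + c"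
  using E_add_le[of X "\<lambda>_. c"] E_add_le[of "\<lambda>w. X w + c" "\<lambda>_. - c"] add_const_in[of X c] by force

lemma E_diff_le: "X \<in> H \<Longrightarrow> Y \<in> H \<Longrightarrow> E X - E Y \<le> E (\<lambda>w. \<bar>X w - Y w\<bar>)"
  using E_add_le[of Y "\<lambda>w. X w - Y w"] E_mono[of "\<lambda>w. X w - Y w" "\<lambda>w. \<bar>X w - Y w\<bar>"]
    diff_in[of X Y] abs_in[OF diff_in[of X Y]] by force

lemma abs_E_diff_le: "X \<in> H \<Longrightarrow> Y \<in> H \<Longrightarrow> \<bar>E X - E Y\<bar> \<le> E (\<lambda>w. \<bar>X w - Y w\<bar>)"
  using E_diff_le[of X Y] E_diff_le[of Y X] by (simp add: abs_minus_commute)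

lemma abs_E_diff_le_affine:
  assumes "X \<in> H" "Y \<in> H" "Z \<in> H" "0 \<le> a" "\<And>w. \<bar>X w - Y w\<bar> \<le> a * \<bar>Z w\<bar> + b"
  shows "\<bar>E X - E Y\<bar> \<le> a * E (\<lambda>w. \<bar>Z w\<bar>) + b"
proof -
  have "\<bar>E X - E Y\<bar> \<le> E (\<lambda>w. \<bar>X w - Y w\<bar>)" by (rule abs_E_diff_le[OF assms(1,2)])
  also have "\<dots> \<le> E (\<lambda>w. a * \<bar>Z w\<bar> + b)"
    using assms abs_in[OF diff_in[OF assms(1,2)]] add_const_in[OF scale_in[OF abs_in[OF assms(3)]]]
    by (intro E_mono) auto
  also have "\<dots> = a * E (\<lambda>w. \<bar>Z w\<bar>) + b"
    using assms E_add_const[OF scale_in[OF abs_in[OF assms(3)]]] E_scale[OF abs_in[OF assms(3)]] by simp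
  finally show ?thesis .
qed

lemma E_abs_add_const_le:
  assumes "X \<in> H"
  shows "E (\<lambda>w. \<bar>X w + c\<bar>) \<le> E (\<lambda>w. \<bar>X w\<bar>) + \<bar>c\<bar>"
proof -
  have "E (\<lambda>w. \<bar>X w + c\<bar>) \<le> E (\<lambda>w. \<bar>X w\<bar> + \<bar>c\<bar>)"
    using abs_in[OF add_const_in[OF assms]] add_const_in[OF abs_in[OF assms]]
    by (intro E_mono) (auto simp: abs_triangle_ineq)
  then show ?thesis using E_add_const[OF abs_in[OF assms]] by simp
qed

end

locale G_space =
  fixes T :: real and LG :: "real \<Rightarrow> ('w \<Rightarrow> real) set" and E :: "('w \<Rightarrow> real) \<Rightarrow> real"
  assumes G_framework: "G_framework T LG E" and T_nonneg: "0 \<le> T"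

sublocale G_space \<subseteq> sublinear_expectation_space "LG T" E
  using G_framework T_nonneg unfolding G_framework_def by unfold_locales auto

context G_space
begin

lemma sublinear_LG: "v \<in> {0..T} \<Longrightarrow> sublinear_expectation_space (LG v) E"
  using G_framework unfolding G_framework_def by (simp add: sublinear_expectation_space.intro)

lemma LG_subset: "v \<in> {0..T} \<Longrightarrow> LG v \<subseteq> LG T"
  using G_framework unfolding G_framework_def by auto

lemma comp_Lipschitz_in:
  assumes "X \<in> LG T" "\<And>y. (\<lambda>w. f w y) \<in> LG T" "\<And>w y y'. \<bar>f w y - f w y'\<bar> \<le> c * \<bar>y - y'\<bar>"
  shows "(\<lambda>w. f w (X w)) \<in> LG T"
  using G_framework assms unfolding G_framework_def by blast

lemma C1G_in: "C1G T LG E Y \<Longrightarrow> v \<in> {0..T} \<Longrightarrow> Y v \<in> LG T"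
  using LG_subset unfolding C1G_def by blast

lemma continuous_on_E_C1G:
  assumes Y: "C1G T LG E Y"
  shows "continuous_on {0..T} (\<lambda>v. E (Y v))"
  unfolding continuous_on_iff
proof (intro ballI allI impI)
  fix v e :: real assume v: "v \<in> {0..T}" and "0 < e"
  then obtain d where "0 < d" and d: "\<forall>v'\<in>{0..T}. \<bar>v' - v\<bar> < d \<longrightarrow> E (\<lambda>w. \<bar>Y v' w - Y v w\<bar>) < e"
    using Y unfolding C1G_def by blast
  have "dist (E (Y v')) (E (Y v)) < e" if "v' \<in> {0..T}" "dist v' v < d" for v'
    using abs_E_diff_le[OF C1G_in[OF Y that(1)] C1G_in[OF Y v]] d that by (force simp: dist_real_def)
  then show "\<exists>d>0. \<forall>v'\<in>{0..T}. dist v' v < d \<longrightarrow> dist (E (Y v')) (E (Y v)) < e"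
    using \<open>0 < d\<close> by blast
qed

lemma C1G_add_continuous:
  assumes Y: "C1G T LG E Y" and c: "continuous_on {0..T} c"
  shows "C1G T LG E (\<lambda>v w. Y v w + c v)"
  unfolding C1G_def
proof (intro conjI ballI allI impI)
  fix v assume "v \<in> {0..T}"
  then show "(\<lambda>w. Y v w + c v) \<in> LG v"
    using Y sublinear_expectation_space.add_const_in[OF sublinear_LG] unfolding C1G_def by blast
next
  fix v e :: real assume v: "v \<in> {0..T}" and "0 < e"
  then obtain d1 where "0 < d1" and d1: "\<forall>v'\<in>{0..T}. \<bar>v' - v\<bar> < d1 \<longrightarrow> E (\<lambda>w. \<bar>Y v' w - Y v w\<bar>) < e / 2"
    using Y unfolding C1G_def by (meson half_gt_zero)
  obtain d2 where "0 < d2" and d2: "\<forall>v'\<in>{0..T}. dist v' v < d2 \<longrightarrow> dist (c v') (c v) < e / 2"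
    using c v \<open>0 < e\<close> unfolding continuous_on_iff by (meson half_gt_zero)
  have "E (\<lambda>w. \<bar>(Y v' w + c v') - (Y v w + c v)\<bar>) < e" if v': "v' \<in> {0..T}" "\<bar>v' - v\<bar> < min d1 d2" for v'
  proof -
    have "E (\<lambda>w. \<bar>(Y v' w + c v') - (Y v w + c v)\<bar>) = E (\<lambda>w. \<bar>(Y v' w - Y v w) + (c v' - c v)\<bar>)"
      by (simp add: algebra_simps)
    also have "\<dots> \<le> E (\<lambda>w. \<bar>Y v' w - Y v w\<bar>) + \<bar>c v' - c v\<bar>"
      using C1G_in[OF Y v'(1)] C1G_in[OF Y v] by (intro E_abs_add_const_le diff_in)
    also have "\<dots> < e / 2 + e / 2"
      using d1 d2 v' by (intro add_strict_mono) (auto simp: dist_real_def)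
    finally show ?thesis by simp
  qed
  then show "\<exists>\<delta>>0. \<forall>v'\<in>{0..T}. \<bar>v' - v\<bar> < \<delta> \<longrightarrow> E (\<lambda>w. \<bar>Y v' w + c v' - (Y v w + c v)\<bar>) < e"
    using \<open>0 < d1\<close> \<open>0 < d2\<close> by (intro exI[of _ "min d1 d2"]) auto
qed

end

locale hbar_setting = G_space +
  fixes hbar :: "real \<Rightarrow> 'w \<Rightarrow> real \<Rightarrow> real" and c_lo c_up :: real
  assumes h_unif: "\<forall>\<epsilon>>0. \<exists>\<delta>>0. \<forall>w t t' y y'. t \<in> {0..T} \<and> t' \<in> {0..T} \<and>
                   \<bar>t - t'\<bar> < \<delta> \<and> \<bar>y - y'\<bar> < \<delta> \<longrightarrow> \<bar>hbar t w y - hbar t' w y'\<bar> < \<epsilon>"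
    and h_mono: "\<forall>t\<in>{0..T}. \<forall>w. strict_mono (hbar t w)"
    and h_LG: "\<forall>t\<in>{0..T}. \<forall>y. (\<lambda>w. hbar t w y) \<in> LG T"
    and c_lo_pos: "0 < c_lo"
    and h_lip: "\<forall>t\<in>{0..T}. \<forall>w y y'. c_lo * \<bar>y - y'\<bar> \<le> \<bar>hbar t w y - hbar t w y'\<bar> \<and>
                            \<bar>hbar t w y - hbar t w y'\<bar> \<le> c_up * \<bar>y - y'\<bar>"
begin

lemma hbar_Lipschitz_bounds:
  "t \<in> {0..T} \<Longrightarrow> c_lo * \<bar>y - y'\<bar> \<le> \<bar>hbar t w y - hbar t w y'\<bar>"
  "t \<in> {0..T} \<Longrightarrow> \<bar>hbar t w y - hbar t w y'\<bar> \<le> c_up * \<bar>y - y'\<bar>"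
  using h_lip by blast+

lemma c_up_pos: "0 < c_up"
proof -
  have "0 \<in> {0..T}" using T_nonneg by simp
  then have "c_lo * \<bar>1 - 0\<bar> \<le> c_up * \<bar>1 - (0::real)\<bar>"
    using hbar_Lipschitz_bounds[where t = 0 and y = 1 and y' = 0] order_trans by blast
  then show ?thesis using c_lo_pos by simp
qed

lemma hbar_shift_in:
  assumes "t \<in> {0..T}" "X \<in> LG T"
  shows "(\<lambda>w. hbar t w (X w + c)) \<in> LG T"
proof (rule comp_Lipschitz_in[OF assms(2), where f = "\<lambda>w y. hbar t w (y + c)"])
  show "(\<lambda>w. hbar t w (y + c)) \<in> LG T" for y using h_LG assms(1) by blast
  show "\<bar>hbar t w (y + c) - hbar t w (y' + c)\<bar> \<le> c_up * \<bar>y - y'\<bar>" for w y y'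
    using hbar_Lipschitz_bounds(2)[OF assms(1), where w = w and y = "y + c" and y' = "y' + c"] by simp
qed

lemma hbar_increment_bounds:
  assumes "t \<in> {0..T}" "y \<le> y'"
  shows "c_lo * (y' - y) \<le> hbar t w y' - hbar t w y" "hbar t w y' - hbar t w y \<le> c_up * (y' - y)"
proof -
  have "strict_mono (hbar t w)" using h_mono assms(1) by blast
  then have "hbar t w y \<le> hbar t w y'" using assms(2) by (simp add: strict_mono_less_eq)
  then show "c_lo * (y' - y) \<le> hbar t w y' - hbar t w y" "hbar t w y' - hbar t w y \<le> c_up * (y' - y)"
    using hbar_Lipschitz_bounds[OF assms(1), where w = w and y = y' and y' = y] assms(2) by simp_all
qed

lemma Hbar_alt: "Hbar E hbar t x X = E (\<lambda>w. hbar t w (X w + (x - E X)))"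
  unfolding Hbar_def by (simp add: algebra_simps)

lemma Hbar_increment_bounds:
  assumes t: "t \<in> {0..T}" and X: "X \<in> LG T" and "x \<le> x'"
  shows "c_lo * (x' - x) \<le> Hbar E hbar t x' X - Hbar E hbar t x X"
    "Hbar E hbar t x' X - Hbar E hbar t x X \<le> c_up * (x' - x)"
proof -
  let ?Z = "\<lambda>x w. hbar t w (X w + (x - E X))"
  have Z: "?Z x \<in> LG T" "?Z x' \<in> LG T" using hbar_shift_in[OF t X] by auto
  have "?Z x w + c_lo * (x' - x) \<le> ?Z x' w" "?Z x' w \<le> ?Z x w + c_up * (x' - x)" for w
    using hbar_increment_bounds[OF t, of "X w + (x - E X)" "X w + (x' - E X)" w] \<open>x \<le> x'\<close>
    by (simp_all add: le_diff_eq diff_le_eq add.commute)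
  then have "E (\<lambda>w. ?Z x w + c_lo * (x' - x)) \<le> E (?Z x')" "E (?Z x') \<le> E (\<lambda>w. ?Z x w + c_up * (x' - x))"
    using Z by (auto intro!: E_mono add_const_in)
  then show "c_lo * (x' - x) \<le> Hbar E hbar t x' X - Hbar E hbar t x X"
    "Hbar E hbar t x' X - Hbar E hbar t x X \<le> c_up * (x' - x)"
    unfolding Hbar_alt using E_add_const[OF Z(1)] by simp_all
qed

lemma Hbar_less:
  "t \<in> {0..T} \<Longrightarrow> X \<in> LG T \<Longrightarrow> x < x' \<Longrightarrow> Hbar E hbar t x X < Hbar E hbar t x' X"
  using Hbar_increment_bounds(1)[of t X x x'] mult_pos_pos[OF c_lo_pos, of "x' - x"] by simp

lemma Hbar_le_iff:
  assumes "t \<in> {0..T}" "X \<in> LG T"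
  shows "Hbar E hbar t x X \<le> Hbar E hbar t x' X \<longleftrightarrow> x \<le> x'"
proof
  assume le: "Hbar E hbar t x X \<le> Hbar E hbar t x' X"
  show "x \<le> x'"
  proof (rule ccontr)
    assume "\<not> x \<le> x'"
    then have "Hbar E hbar t x' X < Hbar E hbar t x X" using Hbar_less[OF assms] by simp
    with le show False by simp
  qed
next
  assume "x \<le> x'"
  then show "Hbar E hbar t x X \<le> Hbar E hbar t x' X"
    using Hbar_less[OF assms, of x x'] by (cases "x = x'") auto
qed

lemma Hbar_eq_iff:
  "t \<in> {0..T} \<Longrightarrow> X \<in> LG T \<Longrightarrow> Hbar E hbar t x X = Hbar E hbar t x' X \<longleftrightarrow> x = x'"
  using Hbar_le_iff[of t X x x'] Hbar_le_iff[of t X x' x] by auto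

lemma Hbar_Lipschitz_bounds:
  assumes "t \<in> {0..T}" "X \<in> LG T"
  shows "c_lo * \<bar>x - x'\<bar> \<le> \<bar>Hbar E hbar t x X - Hbar E hbar t x' X\<bar>"
    "\<bar>Hbar E hbar t x X - Hbar E hbar t x' X\<bar> \<le> c_up * \<bar>x - x'\<bar>"
proof -
  have "c_lo * \<bar>x - x'\<bar> \<le> \<bar>Hbar E hbar t x X - Hbar E hbar t x' X\<bar> \<and>
      \<bar>Hbar E hbar t x X - Hbar E hbar t x' X\<bar> \<le> c_up * \<bar>x - x'\<bar>" for x x'
  proof (cases "x \<le> x'")
    case True
    have "0 \<le> c_lo * (x' - x)" using True c_lo_pos by simp
    then have "\<bar>Hbar E hbar t x X - Hbar E hbar t x' X\<bar> = Hbar E hbar t x' X - Hbar E hbar t x X"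
      using Hbar_increment_bounds(1)[OF assms True] by linarith
    then show ?thesis using Hbar_increment_bounds[OF assms True] True by (simp add: abs_minus_commute)
  next
    case False
    have "0 \<le> c_lo * (x - x')" using False c_lo_pos by simp
    then have "\<bar>Hbar E hbar t x X - Hbar E hbar t x' X\<bar> = Hbar E hbar t x X - Hbar E hbar t x' X"
      using Hbar_increment_bounds(1)[OF assms, of x' x] False by linarith
    then show ?thesis using Hbar_increment_bounds[OF assms, of x' x] False by simp
  qed
  then show "c_lo * \<bar>x - x'\<bar> \<le> \<bar>Hbar E hbar t x X - Hbar E hbar t x' X\<bar>"
    "\<bar>Hbar E hbar t x X - Hbar E hbar t x' X\<bar> \<le> c_up * \<bar>x - x'\<bar>" by blast+
qed

lemma continuous_on_Hbar:
  assumes "t \<in> {0..T}" "X \<in> LG T"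
  shows "continuous_on S (\<lambda>x. Hbar E hbar t x X)"
proof (rule lipschitz_on_continuous_on[OF lipschitz_onI])
  show "dist (Hbar E hbar t x X) (Hbar E hbar t x' X) \<le> c_up * dist x x'" for x x'
    using Hbar_Lipschitz_bounds(2)[OF assms] by (simp add: dist_real_def)
qed (use c_up_pos in simp)

text \<open>\<open>Hinv\<close> is defined by \<open>THE\<close>; a solution exists by the intermediate value theorem, since
  \<open>x \<mapsto> Hbar t x X\<close> is continuous and grows at least like \<open>c_lo * x\<close>.\<close>
lemma Hbar_Hinv:
  assumes t: "t \<in> {0..T}" and X: "X \<in> LG T"
  shows "Hbar E hbar t (Hinv E hbar t X c) X = c"
proof -
  let ?f = "\<lambda>x. Hbar E hbar t x X"
  define r where "r = \<bar>c - ?f 0\<bar> / c_lo"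
  have "0 \<le> r" "c_lo * r = \<bar>c - ?f 0\<bar>" using c_lo_pos by (simp_all add: r_def)
  then have "?f (- r) \<le> c" "c \<le> ?f r"
    using Hbar_increment_bounds(1)[OF t X, of "- r" 0] Hbar_increment_bounds(1)[OF t X, of 0 r] by auto
  then obtain x where "?f x = c"
    using IVT'[of ?f "- r" c r] \<open>0 \<le> r\<close> continuous_on_Hbar[OF t X] by auto
  moreover have "Hinv E hbar t X c = x"
    unfolding Hinv_def using \<open>?f x = c\<close> Hbar_eq_iff[OF t X] by (intro the_equality) auto
  ultimately show ?thesis by simp
qed

lemma continuous_on_E_hbar:
  assumes Z: "C1G T LG E Z"
  shows "continuous_on {0..T} (\<lambda>v. E (\<lambda>w. hbar v w (Z v w)))"
  unfolding continuous_on_iff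
proof (intro ballI allI impI)
  fix v e :: real assume v: "v \<in> {0..T}" and "0 < e"
  obtain d1 where "0 < d1" and d1: "\<forall>w t t' y y'. t \<in> {0..T} \<and> t' \<in> {0..T} \<and>
      \<bar>t - t'\<bar> < d1 \<and> \<bar>y - y'\<bar> < d1 \<longrightarrow> \<bar>hbar t w y - hbar t' w y'\<bar> < e / 2"
    using h_unif \<open>0 < e\<close> by (meson half_gt_zero)
  have "0 < e / (2 * c_up)" using \<open>0 < e\<close> c_up_pos by simp
  then obtain d2 where "0 < d2"
    and d2: "\<forall>v'\<in>{0..T}. \<bar>v' - v\<bar> < d2 \<longrightarrow> E (\<lambda>w. \<bar>Z v' w - Z v w\<bar>) < e / (2 * c_up)"
    using Z v unfolding C1G_def by blast
  have "dist (E (\<lambda>w. hbar v' w (Z v' w))) (E (\<lambda>w. hbar v w (Z v w))) < e"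
    if v': "v' \<in> {0..T}" "dist v' v < min d1 d2" for v'
  proof -
    have "\<bar>hbar v' w (Z v' w) - hbar v w (Z v w)\<bar> \<le> c_up * \<bar>Z v' w - Z v w\<bar> + e / 2" for w
    proof -
      have "\<bar>hbar v' w (Z v' w) - hbar v w (Z v' w)\<bar> < e / 2"
        using d1[rule_format, of v' v "Z v' w" "Z v' w" w] v v' \<open>0 < d1\<close> by (simp add: dist_real_def)
      moreover have "\<bar>hbar v w (Z v' w) - hbar v w (Z v w)\<bar> \<le> c_up * \<bar>Z v' w - Z v w\<bar>"
        by (rule hbar_Lipschitz_bounds(2)[OF v])
      ultimately show ?thesis by linarith
    qed
    moreover have "(\<lambda>w. hbar v' w (Z v' w)) \<in> LG T" "(\<lambda>w. hbar v w (Z v w)) \<in> LG T"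
      using hbar_shift_in[OF v'(1) C1G_in[OF Z v'(1)], of 0] hbar_shift_in[OF v C1G_in[OF Z v], of 0] by simp_all
    moreover have "(\<lambda>w. Z v' w - Z v w) \<in> LG T" by (rule diff_in[OF C1G_in[OF Z v'(1)] C1G_in[OF Z v]])
    ultimately have "\<bar>E (\<lambda>w. hbar v' w (Z v' w)) - E (\<lambda>w. hbar v w (Z v w))\<bar>
        \<le> c_up * E (\<lambda>w. \<bar>Z v' w - Z v w\<bar>) + e / 2"
      using c_up_pos by (intro abs_E_diff_le_affine) auto
    also have "c_up * E (\<lambda>w. \<bar>Z v' w - Z v w\<bar>) < c_up * (e / (2 * c_up))"
      using d2 v' c_up_pos by (intro mult_strict_left_mono) (auto simp: dist_real_def)
    also have "c_up * (e / (2 * c_up)) = e / 2" using c_up_pos by simp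
    finally show ?thesis by (simp add: dist_real_def)
  qed
  then show "\<exists>d>0. \<forall>v'\<in>{0..T}. dist v' v < d \<longrightarrow>
      dist (E (\<lambda>w. hbar v' w (Z v' w))) (E (\<lambda>w. hbar v w (Z v w))) < e"
    using \<open>0 < d1\<close> \<open>0 < d2\<close> by (intro exI[of _ "min d1 d2"]) auto
qed

lemma continuous_on_Hbar_C1G:
  assumes Y: "C1G T LG E Y"
  shows "continuous_on {0..T} (\<lambda>t. Hbar E hbar t x (Y t))"
proof -
  have "C1G T LG E (\<lambda>v w. Y v w + (x - E (Y v)))"
    using continuous_on_E_C1G[OF Y] by (intro C1G_add_continuous[OF Y] continuous_intros)
  then show ?thesis
    unfolding Hbar_alt by (rule continuous_on_E_hbar)
qed

text \<open>The inverse inherits continuity from the lower Lipschitz bound: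
  \<open>c_lo * \<bar>K t - K s\<bar> \<le> \<bar>Hbar t (K t) - Hbar t (K s)\<bar> = \<bar>c t - Hbar t (K s)\<bar>\<close> and \<open>Hbar s (K s) = c s\<close>.\<close>
lemma continuous_on_Hinv:
  assumes Y: "C1G T LG E Y" and c: "continuous_on {0..T} c"
  shows "continuous_on {0..T} (\<lambda>t. Hinv E hbar t (Y t) (c t))"
  unfolding continuous_on_iff
proof (intro ballI allI impI)
  fix s e :: real assume s: "s \<in> {0..T}" and "0 < e"
  define K where "K t = Hinv E hbar t (Y t) (c t)" for t
  have K: "Hbar E hbar t (K t) (Y t) = c t" if "t \<in> {0..T}" for t
    unfolding K_def using Hbar_Hinv[OF that C1G_in[OF Y that]] .
  have "0 < c_lo * e / 2" using \<open>0 < e\<close> c_lo_pos by simp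
  obtain d1 where "0 < d1" and d1: "\<forall>t\<in>{0..T}. dist t s < d1 \<longrightarrow> dist (c t) (c s) < c_lo * e / 2"
    using c s \<open>0 < c_lo * e / 2\<close> unfolding continuous_on_iff by blast
  obtain d2 where "0 < d2" and d2: "\<forall>t\<in>{0..T}. dist t s < d2 \<longrightarrow>
      dist (Hbar E hbar t (K s) (Y t)) (Hbar E hbar s (K s) (Y s)) < c_lo * e / 2"
    using continuous_on_Hbar_C1G[OF Y, of "K s"] s \<open>0 < c_lo * e / 2\<close> unfolding continuous_on_iff by blast
  have "dist (K t) (K s) < e" if t: "t \<in> {0..T}" "dist t s < min d1 d2" for t
  proof -
    have "c_lo * \<bar>K t - K s\<bar> \<le> \<bar>Hbar E hbar t (K t) (Y t) - Hbar E hbar t (K s) (Y t)\<bar>"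
      by (rule Hbar_Lipschitz_bounds(1)[OF t(1) C1G_in[OF Y t(1)]])
    also have "\<dots> \<le> \<bar>c t - c s\<bar> + \<bar>Hbar E hbar s (K s) (Y s) - Hbar E hbar t (K s) (Y t)\<bar>"
      using K[OF t(1)] K[OF s] by linarith
    also have "\<dots> < c_lo * e / 2 + c_lo * e / 2"
      using d1 d2 t by (intro add_strict_mono) (auto simp: dist_real_def abs_minus_commute)
    finally show ?thesis using c_lo_pos by (simp add: dist_real_def)
  qed
  then show "\<exists>d>0. \<forall>t\<in>{0..T}. dist t s < d \<longrightarrow>
      dist (Hinv E hbar t (Y t) (c t)) (Hinv E hbar s (Y s) (c s)) < e"
    using \<open>0 < d1\<close> \<open>0 < d2\<close> unfolding K_def by (intro exI[of _ "min d1 d2"]) auto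
qed

end

section \<open>The backward Skorokhod problem with sublinear expectation\<close>

locale bsp_setting = hbar_setting +
  fixes l u :: "real \<Rightarrow> real" and Ybar :: "real \<Rightarrow> 'w \<Rightarrow> real"
  assumes l_cont: "continuous_on {0..T} l" and u_cont: "continuous_on {0..T} u"
    and gap: "0 < (INF t\<in>{0..T}. u t - l t)"
    and Ybar_C1G: "C1G T LG E Ybar"
    and terminal: "l T \<le> E (\<lambda>w. hbar T w (Ybar T w))" "E (\<lambda>w. hbar T w (Ybar T w)) \<le> u T"
begin

definition psi :: "real \<Rightarrow> real" where
  "psi t = E (Ybar t) - Lbar E hbar l t (Ybar t)"

definition theta :: "real \<Rightarrow> real" where
  "theta t = E (Ybar t) - Ubar E hbar u t (Ybar t)"

lemma E_hbar_shift: "E (\<lambda>w. hbar t w (Ybar t w - x)) = Hbar E hbar t (E (Ybar t) - x) (Ybar t)"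
  unfolding Hbar_def by (simp add: algebra_simps)

lemma constraint_le_iff:
  assumes t: "t \<in> {0..T}"
  shows "l t \<le> E (\<lambda>w. hbar t w (Ybar t w - x)) \<longleftrightarrow> x \<le> psi t"
    "E (\<lambda>w. hbar t w (Ybar t w - x)) \<le> u t \<longleftrightarrow> theta t \<le> x"
proof -
  have Y: "Ybar t \<in> LG T" by (rule C1G_in[OF Ybar_C1G t])
  have "l t = Hbar E hbar t (Lbar E hbar l t (Ybar t)) (Ybar t)" "u t = Hbar E hbar t (Ubar E hbar u t (Ybar t)) (Ybar t)"
    unfolding Lbar_def Ubar_def using Hbar_Hinv[OF t Y] by simp_all
  then show "l t \<le> E (\<lambda>w. hbar t w (Ybar t w - x)) \<longleftrightarrow> x \<le> psi t"
    "E (\<lambda>w. hbar t w (Ybar t w - x)) \<le> u t \<longleftrightarrow> theta t \<le> x"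
    unfolding E_hbar_shift psi_def theta_def using Hbar_le_iff[OF t Y] by auto
qed

lemma constraint_eq_iff:
  assumes t: "t \<in> {0..T}"
  shows "E (\<lambda>w. hbar t w (Ybar t w - x)) = l t \<longleftrightarrow> x = psi t"
    "E (\<lambda>w. hbar t w (Ybar t w - x)) = u t \<longleftrightarrow> x = theta t"
proof -
  have Y: "Ybar t \<in> LG T" by (rule C1G_in[OF Ybar_C1G t])
  have "l t = Hbar E hbar t (Lbar E hbar l t (Ybar t)) (Ybar t)" "u t = Hbar E hbar t (Ubar E hbar u t (Ybar t)) (Ybar t)"
    unfolding Lbar_def Ubar_def using Hbar_Hinv[OF t Y] by simp_all
  then show "E (\<lambda>w. hbar t w (Ybar t w - x)) = l t \<longleftrightarrow> x = psi t"
    "E (\<lambda>w. hbar t w (Ybar t w - x)) = u t \<longleftrightarrow> x = theta t"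
    unfolding E_hbar_shift psi_def theta_def using Hbar_eq_iff[OF t Y] by auto
qed

lemma continuous_psi: "continuous_on {0..T} psi"
  unfolding psi_def Lbar_def
  by (intro continuous_intros continuous_on_E_C1G continuous_on_Hinv Ybar_C1G l_cont)

lemma continuous_theta: "continuous_on {0..T} theta"
  unfolding theta_def Ubar_def
  by (intro continuous_intros continuous_on_E_C1G continuous_on_Hinv Ybar_C1G u_cont)

text \<open>Since \<open>Hbar\<close> grows at most like \<open>c_up\<close>, the barriers \<open>l < u\<close> stay a uniform distance apart
  after inversion.\<close>
lemma theta_gap_psi:
  assumes t: "t \<in> {0..T}"
  shows "theta t + (INF s\<in>{0..T}. u s - l s) / c_up \<le> psi t"
proof -
  have Y: "Ybar t \<in> LG T" by (rule C1G_in[OF Ybar_C1G t])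
  let ?L = "Lbar E hbar l t (Ybar t)" and ?U = "Ubar E hbar u t (Ybar t)"
  have LU: "Hbar E hbar t ?L (Ybar t) = l t" "Hbar E hbar t ?U (Ybar t) = u t"
    unfolding Lbar_def Ubar_def using Hbar_Hinv[OF t Y] by simp_all
  have "(INF s\<in>{0..T}. u s - l s) \<le> u t - l t"
    using t by (intro cINF_lower bdd_below_image_Icc continuous_intros l_cont u_cont)
  then have "l t \<le> u t" using gap by simp
  then have "?L \<le> ?U" using LU Hbar_le_iff[OF t Y] by metis
  then have "u t - l t \<le> c_up * (?U - ?L)"
    using Hbar_increment_bounds(2)[OF t Y] LU by metis
  with \<open>(INF s\<in>{0..T}. u s - l s) \<le> u t - l t\<close> show ?thesis
    using c_up_pos by (simp add: psi_def theta_def field_simps)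
qed

lemma terminal_theta_psi: "theta T \<le> 0" "0 \<le> psi T"
  using terminal constraint_le_iff[of T 0] T_nonneg by simp_all


lemma BSP_exists: "\<exists>Y R. BSP T LG E hbar l u Ybar Y R"
proof -
  have "0 < (INF s\<in>{0..T}. u s - l s) / c_up" using gap c_up_pos by simp
  then obtain \<Lambda> A B where S: "skorokhod_decomposition 0 T theta psi \<Lambda> A B" and "\<Lambda> T = 0"
    using skorokhod_decomposition_exists[OF T_nonneg continuous_theta continuous_psi _ _ terminal_theta_psi]
      theta_gap_psi by blast
  have \<Lambda>: "continuous_on {0..T} \<Lambda>" "\<forall>v\<in>{0..T}. theta v \<le> \<Lambda> v \<and> \<Lambda> v \<le> psi v"
    using S unfolding skorokhod_decomposition_def by blast+
  define R where "R = (\<lambda>v. \<Lambda> v - \<Lambda> 0)"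
  define Y where "Y v w = Ybar v w + (- \<Lambda> v)" for v w
  have Y_eq: "Y v w = Ybar v w + R T - R v" for v w
    using \<open>\<Lambda> T = 0\<close> by (simp add: Y_def R_def)
  have Y: "C1G T LG E Y"
    unfolding Y_def by (intro C1G_add_continuous Ybar_C1G continuous_intros \<Lambda>(1))
  define \<phi> where "\<phi> v = E (\<lambda>w. hbar v w (Y v w))" for v
  have \<phi>_cont: "continuous_on {0..T} \<phi>"
    unfolding \<phi>_def by (rule continuous_on_E_hbar[OF Y])
  have \<phi>: "\<phi> v = E (\<lambda>w. hbar v w (Ybar v w - \<Lambda> v))" for v
    by (simp add: \<phi>_def Y_def)
  have l_le: "l v \<le> \<phi> v" and le_u: "\<phi> v \<le> u v" if "v \<in> {0..T}" for v
    using \<Lambda>(2) that constraint_le_iff[OF that] unfolding \<phi> by auto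
  have "(\<exists>I. has_rs_integral (\<lambda>v. \<phi> v - l v) R s t I \<and> I \<le> 0) \<and>
      (\<exists>I. has_rs_integral (\<lambda>v. \<phi> v - u v) R s t I \<and> I \<le> 0)" if "0 \<le> s" "s \<le> t" "t \<le> T" for s t
    unfolding R_def using that l_le le_u constraint_eq_iff \<phi>_cont l_cont u_cont
    by (intro conjI skorokhod_decomposition_rs_integral_upper[OF S] skorokhod_decomposition_rs_integral_lower[OF S])
      (auto simp: \<phi> intro: continuous_intros)
  then have "BSP T LG E hbar l u Ybar Y R"
    unfolding BSP_def using Y skorokhod_decomposition_CTB[OF S] l_le le_u Y_eq
    by (auto simp: R_def \<phi>_def)
  then show ?thesis by blast
qed

lemma BSP_E_hbar:
  assumes "BSP T LG E hbar l u Ybar Y R" "v \<in> {0..T}"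
  shows "E (\<lambda>w. hbar v w (Y v w)) = E (\<lambda>w. hbar v w (Ybar v w - (R v - R T)))"
proof -
  have "Y v w = Ybar v w - (R v - R T)" for w using assms unfolding BSP_def by simp
  then show ?thesis by simp
qed

lemma continuous_on_BSP_E_hbar:
  "BSP T LG E hbar l u Ybar Y R \<Longrightarrow> continuous_on {0..T} (\<lambda>v. E (\<lambda>w. hbar v w (Y v w)))"
  unfolding BSP_def by (blast intro: continuous_on_E_hbar)

text \<open>Where \<open>R\<^sub>v - R\<^sub>T < psi v\<close>, the integrand \<open>E[hbar(v, Y\<^sub>v)] - l\<^sub>v\<close> is positive, so the nonpositive
  integrals of condition (iii) force \<open>R\<close> to decrease.\<close>
lemma BSP_decreasing:
  assumes sol: "BSP T LG E hbar l u Ybar Y R" and "0 \<le> p" "p \<le> q" "q \<le> T"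
    and below: "\<forall>v\<in>{p..q}. R v - R T < psi v"
  shows "R q \<le> R p"
proof (rule rs_integral_nonpos_imp_decreasing[of p q "\<lambda>v. E (\<lambda>w. hbar v w (Y v w)) - l v"])
  show "continuous_on {p..q} (\<lambda>v. E (\<lambda>w. hbar v w (Y v w)) - l v)"
    using assms by (intro continuous_intros continuous_on_subset[OF continuous_on_BSP_E_hbar[OF sol]]
        continuous_on_subset[OF l_cont]) auto
  show "\<forall>v\<in>{p..q}. 0 < E (\<lambda>w. hbar v w (Y v w)) - l v"
  proof
    fix v assume "v \<in> {p..q}"
    then have v: "v \<in> {0..T}" "R v - R T < psi v" using assms by auto
    then show "0 < E (\<lambda>w. hbar v w (Y v w)) - l v"
      using constraint_le_iff(1)[OF v(1)] constraint_eq_iff(1)[OF v(1)] BSP_E_hbar[OF sol v(1)]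
      by (metis diff_gt_0_iff_gt less_le not_le)
  qed
  show "bounded_variation_on R p q"
    using sol assms unfolding BSP_def CTB_def by (auto intro: bounded_variation_on_subset)
  show "\<forall>s t. p \<le> s \<and> s \<le> t \<and> t \<le> q \<longrightarrow>
      (\<exists>J. has_rs_integral (\<lambda>v. E (\<lambda>w. hbar v w (Y v w)) - l v) R s t J \<and> J \<le> 0)"
    using sol assms unfolding BSP_def by (meson order.trans)
qed (rule \<open>p \<le> q\<close>)

lemma BSP_increasing:
  assumes sol: "BSP T LG E hbar l u Ybar Y R" and "0 \<le> p" "p \<le> q" "q \<le> T"
    and above: "\<forall>v\<in>{p..q}. theta v < R v - R T"
  shows "R p \<le> R q"
proof -
  have "- R q \<le> - R p"
  proof (rule rs_integral_nonpos_imp_decreasing[of p q "\<lambda>v. - (E (\<lambda>w. hbar v w (Y v w)) - u v)"])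
    show "continuous_on {p..q} (\<lambda>v. - (E (\<lambda>w. hbar v w (Y v w)) - u v))"
      using assms by (intro continuous_intros continuous_on_subset[OF continuous_on_BSP_E_hbar[OF sol]]
          continuous_on_subset[OF u_cont]) auto
    show "\<forall>v\<in>{p..q}. 0 < - (E (\<lambda>w. hbar v w (Y v w)) - u v)"
    proof
      fix v assume "v \<in> {p..q}"
      then have v: "v \<in> {0..T}" "theta v < R v - R T" using assms by auto
      then show "0 < - (E (\<lambda>w. hbar v w (Y v w)) - u v)"
        using constraint_le_iff(2)[OF v(1)] constraint_eq_iff(2)[OF v(1)] BSP_E_hbar[OF sol v(1)]
        by (metis diff_less_0_iff_less less_le neg_0_less_iff_less not_le)
    qed
    show "bounded_variation_on (\<lambda>v. - R v) p q"
      using sol assms unfolding BSP_def CTB_def by (auto intro: bounded_variation_on_uminus bounded_variation_on_subset)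
    show "\<forall>s t. p \<le> s \<and> s \<le> t \<and> t \<le> q \<longrightarrow>
        (\<exists>J. has_rs_integral (\<lambda>v. - (E (\<lambda>w. hbar v w (Y v w)) - u v)) (\<lambda>v. - R v) s t J \<and> J \<le> 0)"
    proof (intro allI impI)
      fix s t assume "p \<le> s \<and> s \<le> t \<and> t \<le> q"
      then obtain J where J: "has_rs_integral (\<lambda>v. E (\<lambda>w. hbar v w (Y v w)) - u v) R s t J" "J \<le> 0"
        using sol assms unfolding BSP_def by (meson order.trans)
      show "\<exists>J. has_rs_integral (\<lambda>v. - (E (\<lambda>w. hbar v w (Y v w)) - u v)) (\<lambda>v. - R v) s t J \<and> J \<le> 0"
        using has_rs_integral_uminus_integrator[OF has_rs_integral_uminus[OF J(1)]] J(2) by auto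
    qed
  qed (rule \<open>p \<le> q\<close>)
  then show ?thesis by simp
qed

lemma BSP_backward_skorokhod:
  assumes sol: "BSP T LG E hbar l u Ybar Y R"
  shows "backward_skorokhod theta psi T (\<lambda>v. R v - R T)"
  unfolding backward_skorokhod_def
proof (intro conjI ballI allI impI)
  show "continuous_on {0..T} (\<lambda>v. R v - R T)"
    using sol unfolding BSP_def CTB_def by (auto intro: continuous_intros)
next
  fix v assume v: "v \<in> {0..T}"
  then have "l v \<le> E (\<lambda>w. hbar v w (Y v w))" "E (\<lambda>w. hbar v w (Y v w)) \<le> u v"
    using sol unfolding BSP_def by auto
  then show "theta v \<le> R v - R T" "R v - R T \<le> psi v"
    using constraint_le_iff[OF v, of "R v - R T"] BSP_E_hbar[OF sol v] by simp_all
next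
  fix p q assume "0 \<le> p \<and> p \<le> q \<and> q \<le> T \<and> (\<forall>v\<in>{p..q}. R v - R T < psi v)"
  then show "R q - R T \<le> R p - R T" using BSP_decreasing[OF sol] by simp
next
  fix p q assume "0 \<le> p \<and> p \<le> q \<and> q \<le> T \<and> (\<forall>v\<in>{p..q}. theta v < R v - R T)"
  then show "R p - R T \<le> R q - R T" using BSP_increasing[OF sol] by simp
qed simp

lemma BSP_formula:
  assumes "BSP T LG E hbar l u Ybar Y R" "t \<in> {0..T}"
  shows "R T - R t =
      - max (min (max (E (Ybar T) - Ubar E hbar u T (Ybar T)) 0)
                 (INF v\<in>{t..T}. E (Ybar v) - Lbar E hbar l v (Ybar v)))
            (SUP s\<in>{t..T}. min (E (Ybar s) - Ubar E hbar u s (Ybar s))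
                               (INF v\<in>{t..s}. E (Ybar v) - Lbar E hbar l v (Ybar v)))"
proof -
  have "R t - R T = max (min (max (theta T) 0) (INF v\<in>{t..T}. psi v))
                        (SUP s\<in>{t..T}. min (theta s) (INF v\<in>{t..s}. psi v))"
    using backward_skorokhod_formula[OF BSP_backward_skorokhod[OF assms(1)] continuous_psi continuous_theta
      terminal_theta_psi(1), of t] assms(2) by simp
  then show ?thesis unfolding psi_def theta_def by linarith
qed

lemma BSP_unique:
  assumes "BSP T LG E hbar l u Ybar Y R" "BSP T LG E hbar l u Ybar Y' R'" "t \<in> {0..T}"
  shows "Y' t = Y t \<and> R' t = R t"
proof -
  have eq: "R' T - R' v = R T - R v" if "v \<in> {0..T}" for v
    using BSP_formula[OF assms(1) that] BSP_formula[OF assms(2) that] by simp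
  have "R 0 = 0" "R' 0 = 0"
    using assms(1,2) unfolding BSP_def CTB_def by auto
  then have "R' T = R T" using eq[of 0] T_nonneg by simp
  then have "R' t = R t" using eq[OF assms(3)] by simp
  then show ?thesis using \<open>R' T = R T\<close> assms unfolding BSP_def by auto
qed

end

theorem theorem3p7:
  fixes T :: real
    and LG :: "real \<Rightarrow> ('w \<Rightarrow> real) set"
    and E :: "('w \<Rightarrow> real) \<Rightarrow> real"
    and hbar :: "real \<Rightarrow> 'w \<Rightarrow> real \<Rightarrow> real"
    and l u :: "real \<Rightarrow> real"
    and Ybar :: "real \<Rightarrow> 'w \<Rightarrow> real"
    and C_h c_lo c_up :: real
  assumes T_pos: "0 < T"
    and frame: "G_framework T LG E"
    and l_cont: "continuous_on {0..T} l" and l_bdd: "bounded (l ` {0..T})"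
    and u_cont: "continuous_on {0..T} u" and u_bdd: "bounded (u ` {0..T})"
    and gap: "0 < (INF t\<in>{0..T}. u t - l t)"
    and h_unif: "\<forall>\<epsilon>>0. \<exists>\<delta>>0. \<forall>w t t' y y'. t \<in> {0..T} \<and> t' \<in> {0..T} \<and>
                   \<bar>t - t'\<bar> < \<delta> \<and> \<bar>y - y'\<bar> < \<delta> \<longrightarrow> \<bar>hbar t w y - hbar t' w y'\<bar> < \<epsilon>"
    and h_mono: "\<forall>t\<in>{0..T}. \<forall>w. strict_mono (hbar t w)"
    and h_LG: "\<forall>t\<in>{0..T}. \<forall>y. (\<lambda>w. hbar t w y) \<in> LG T"
    and h_growth: "0 < C_h" "\<forall>t\<in>{0..T}. \<forall>w y. \<bar>hbar t w y\<bar> \<le> C_h * (1 + \<bar>y\<bar>)"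
    and h_lip: "0 < c_lo" "c_lo \<le> c_up"
      "\<forall>t\<in>{0..T}. \<forall>w y y'. c_lo * \<bar>y - y'\<bar> \<le> \<bar>hbar t w y - hbar t w y'\<bar> \<and>
                            \<bar>hbar t w y - hbar t w y'\<bar> \<le> c_up * \<bar>y - y'\<bar>"
    and Ybar_C1G: "C1G T LG E Ybar"
    and term_cond: "l T \<le> E (\<lambda>w. hbar T w (Ybar T w))" "E (\<lambda>w. hbar T w (Ybar T w)) \<le> u T"
  shows "\<exists>Y R. BSP T LG E hbar l u Ybar Y R \<and>
           (\<forall>Y' R'. BSP T LG E hbar l u Ybar Y' R' \<longrightarrow>
                (\<forall>t\<in>{0..T}. Y' t = Y t \<and> R' t = R t)) \<and>
           (\<forall>t\<in>{0..T}. R T - R t =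
              - max (min (max (E (Ybar T) - Ubar E hbar u T (Ybar T)) 0)
                         (INF v\<in>{t..T}. E (Ybar v) - Lbar E hbar l v (Ybar v)))
                    (SUP s\<in>{t..T}. min (E (Ybar s) - Ubar E hbar u s (Ybar s))
                                       (INF v\<in>{t..s}. E (Ybar v) - Lbar E hbar l v (Ybar v))))"
proof -
  interpret bsp_setting T LG E hbar c_lo c_up l u Ybar
    using T_pos frame h_unif h_mono h_LG h_lip(1,3) Ybar_C1G l_cont u_cont gap term_cond
    by unfold_locales auto
  obtain Y R where sol: "BSP T LG E hbar l u Ybar Y R"
    using BSP_exists by blast
  show ?thesis
    using sol BSP_unique[OF sol] BSP_formula[OF sol] by blast
qed

end
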